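(* Let $\lambda$ be a strict partition of $n$ (all parts distinct), with $\ell(\lambda)$ parts, and let $Q_\lambda$ be Schur's $Q$-function. Let $\mathcal{C}_n$ be a set of compositions of $n$ containing exactly one composition with each peak set. Define the numbers $d_{\lambda I}$ ($I\in\mathcal C_n$) by $$2^{-\lfloor\ell(\lambda)/2\rfloor}Q_\lambda=\sum_{I\in\mathcal{C}_n}d_{\lambda I}\,2^{-\lfloor(|HP(I)|+1)/2\rfloor}\,\Theta_{HP(I)}.$$ These are the decomposition numbers expressing the characteristic of the generic Hecke–Clifford simple module $U_\lambda$ in terms of the characteristics of the simple $HCl_n(0)$-supermodules. Then $$d_{\lambda I}=2^{\lfloor(|HP(I)|+1)/2\rfloor-\lfloor\ell(\lambda)/2\rfloor}\,\big|\{T\in\mathcal{ST}^\lambda:\ \Lambda(T)=HP(I)\}\big|.$$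
   Context: For a composition $K$ of $n$, $\operatorname{Des}(K)$ is the set of its partial sums (excluding $n$), and $HP(K)=\{a\in\operatorname{Des}(K):a\ne1,\ a-1\notin\operatorname{Des}(K)\}$. For a peak set $P\subseteq[2,n-1]$, $\Theta_P=2^{|P|+1}\sum_{K\models n,\ P\subseteq\operatorname{Des}(K)\Delta(\operatorname{Des}(K)+1)}F_K$, where $F_K$ is the fundamental quasi-symmetric function, $A+1=\{a+1:a\in A\}$, and $\Delta$ is symmetric difference; the $\Theta_P$ are linearly independent. $\mathcal{ST}^\lambda$ is the set of standard shifted Young tableaux of shape $\lambda$ (row $j$ shifted $j-1$ cells to the right, entries $1,\dots,n$ increasing along rows and columns). For $T\in\mathcal{ST}^\lambda$, its descent set is $D(T)=\{i: i+1 \text{ lies in a row strictly below the row of } i\}$, and its peak set is $\Lambda(T)=\{i\in D(T): i\ne1,\ i-1\notin D(T)\}$. *)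

theory Defs
  imports Complex_Main
begin

definition compositions :: "nat \<Rightarrow> nat list set" where
  "compositions n = {K. (\<forall>x\<in>set K. 0 < x) \<and> sum_list K = n}"

definition Des :: "nat list \<Rightarrow> nat set" where
  "Des K = {sum_list (take i K) | i. 1 \<le> i \<and> i < length K}"

definition HP :: "nat list \<Rightarrow> nat set" where
  "HP K = {a \<in> Des K. a \<noteq> 1 \<and> a - 1 \<notin> Des K}"

text \<open>A (bounded degree) formal power series in countably many commuting variables
  x_0, x_1, x_2, ... is represented by its coefficient function on monomials; a monomial
  is given by its exponent vector alpha :: nat => nat (alpha v = exponent of x_v).\<close>
type_synonym series = "(nat \<Rightarrow> nat) \<Rightarrow> real"

definition Fq :: "nat list \<Rightarrow> series" where
  "Fq K \<alpha> = real (card {f :: nat \<Rightarrow> nat.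
      (\<forall>j. j \<notin> {1..sum_list K} \<longrightarrow> f j = 0)
    \<and> (\<forall>j \<in> {1..<sum_list K}. f j \<le> f (j + 1) \<and> (j \<in> Des K \<longrightarrow> f j < f (j + 1)))
    \<and> (\<forall>v. \<alpha> v = card {j \<in> {1..sum_list K}. f j = v})})"

definition Theta :: "nat \<Rightarrow> nat set \<Rightarrow> series" where
  "Theta n P \<alpha> = 2 ^ (card P + 1) *
     (\<Sum>K \<in> {K \<in> compositions n.
                P \<subseteq> (Des K - (\<lambda>a. a + 1) ` Des K) \<union> ((\<lambda>a. a + 1) ` Des K - Des K)}.
        Fq K \<alpha>)"

definition strict_partition :: "nat list \<Rightarrow> nat \<Rightarrow> bool" where
  "strict_partition lam n \<longleftrightarrow> sorted_wrt (>) lam \<and> (\<forall>x\<in>set lam. 0 < x) \<and> sum_list lam = n"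

text \<open>Shifted diagram (0-indexed): row r has cells (r,c) with r <= c < r + lam_r.\<close>
definition shifted_diagram :: "nat list \<Rightarrow> (nat \<times> nat) set" where
  "shifted_diagram lam = {(r, c). r < length lam \<and> r \<le> c \<and> c < r + lam ! r}"

text \<open>Marked shifted tableaux: entries from the alphabet 0' < 0 < 1' < 1 < ...,
  encoded as positive naturals: v' is 2v+1 and v is 2v+2 (odd = primed);
  cells outside the diagram carry 0. Rows and columns weakly increase, each unprimed
  letter appears at most once in each column, each primed letter at most once in each row.
  (Primes on the main diagonal are allowed: this gives Q rather than P.)\<close>
definition marked_shifted_tableaux :: "nat list \<Rightarrow> ((nat \<times> nat) \<Rightarrow> nat) set" where
  "marked_shifted_tableaux lam = {T.
      (\<forall>p. p \<notin> shifted_diagram lam \<longrightarrow> T p = 0)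
    \<and> (\<forall>p \<in> shifted_diagram lam. 0 < T p)
    \<and> (\<forall>r c. (r, c) \<in> shifted_diagram lam \<and> (r, c + 1) \<in> shifted_diagram lam \<longrightarrow>
         T (r, c) \<le> T (r, c + 1) \<and> (T (r, c) = T (r, c + 1) \<longrightarrow> even (T (r, c))))
    \<and> (\<forall>r c. (r, c) \<in> shifted_diagram lam \<and> (r + 1, c) \<in> shifted_diagram lam \<longrightarrow>
         T (r, c) \<le> T (r + 1, c) \<and> (T (r, c) = T (r + 1, c) \<longrightarrow> odd (T (r, c))))}"

text \<open>Content: exponent of x_v counts entries v and v'.\<close>
definition tableau_content :: "nat list \<Rightarrow> ((nat \<times> nat) \<Rightarrow> nat) \<Rightarrow> nat \<Rightarrow> nat" where
  "tableau_content lam T v = card {p \<in> shifted_diagram lam. (T p - 1) div 2 = v}"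

definition SchurQ :: "nat list \<Rightarrow> series" where
  "SchurQ lam \<alpha> = real (card {T \<in> marked_shifted_tableaux lam. tableau_content lam T = \<alpha>})"

definition standard_shifted_tableaux :: "nat list \<Rightarrow> ((nat \<times> nat) \<Rightarrow> nat) set" where
  "standard_shifted_tableaux lam = {T.
      (\<forall>p. p \<notin> shifted_diagram lam \<longrightarrow> T p = 0)
    \<and> bij_betw T (shifted_diagram lam) {1..sum_list lam}
    \<and> (\<forall>r c. (r, c) \<in> shifted_diagram lam \<and> (r, c + 1) \<in> shifted_diagram lam \<longrightarrow>
         T (r, c) < T (r, c + 1))
    \<and> (\<forall>r c. (r, c) \<in> shifted_diagram lam \<and> (r + 1, c) \<in> shifted_diagram lam \<longrightarrow>
         T (r, c) < T (r + 1, c))}"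

definition row_of :: "nat list \<Rightarrow> ((nat \<times> nat) \<Rightarrow> nat) \<Rightarrow> nat \<Rightarrow> nat" where
  "row_of lam T i = fst (the_inv_into (shifted_diagram lam) T i)"

definition tab_Des :: "nat list \<Rightarrow> ((nat \<times> nat) \<Rightarrow> nat) \<Rightarrow> nat set" where
  "tab_Des lam T = {i \<in> {1..<sum_list lam}. row_of lam T i < row_of lam T (i + 1)}"

definition tab_Peak :: "nat list \<Rightarrow> ((nat \<times> nat) \<Rightarrow> nat) \<Rightarrow> nat set" where
  "tab_Peak lam T = {i \<in> tab_Des lam T. i \<noteq> 1 \<and> i - 1 \<notin> tab_Des lam T}"

end

(*
  A marked shifted tableau T of shape lam amounts to a pair (S, w): S is the standard tableau
  obtained by numbering the cells of T in increasing order of their letters, equal unprimed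
  letters left to right and equal primed letters top to bottom, and w is a weakly increasing
  marked word whose repeated letters are primed exactly at the descents of S. At a monomial
  x^alpha, whose weakly increasing word has ascent set A, there are 2^(|A|+1) such words if each
  peak p of Des(S) has p or p - 1 in A, and none otherwise; this is the value of Theta_(Lambda(S))
  at x^alpha. Hence Q_lam is the sum of Theta_(Lambda(S)) over all standard shifted tableaux S.

  The Theta_P are linearly independent: at the monomial whose weakly increasing word ascends
  exactly at P, Theta_Q vanishes unless every q in Q has q or q - 1 in P, and for Q <> P this
  forces the weight sum of (n - q) over Q below that over P. Comparing coefficients yields the
  decomposition numbers.
*)
theory Submission
  imports Defs
begin

section \<open>Compositions and their descent sets\<close>

lemma Des_eq_image: "Des K = (\<lambda>i. sum_list (take i K)) ` {1..<length K}"
  unfolding Des_def by auto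

lemma Des_Cons: "Des (a # K) = (if K = [] then {} else insert a ((+) a ` Des K))"
proof -
  have "Des (a # K) = (\<lambda>i. sum_list (take i (a # K))) ` Suc ` {0..<length K}"
    unfolding Des_eq_image
    by (simp del: image_Suc_atLeastLessThan add: image_Suc_atLeastLessThan[symmetric])
  also have "\<dots> = (\<lambda>i. a + sum_list (take i K)) ` {0..<length K}"
    by (simp only: image_image take_Suc_Cons sum_list.Cons)
  also have "\<dots> = (if K = [] then {} else insert a ((+) a ` Des K))"
  proof (cases "K = []")
    case False
    then have "{0..<length K} = insert 0 {1..<length K}" by auto
    then show ?thesis using False by (simp add: Des_eq_image image_image)
  qed simp
  finally show ?thesis .
qed

lemma Des_bounds:
  assumes "\<forall>x\<in>set K. 0 < x" and "d \<in> Des K"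
  shows "0 < d \<and> d < sum_list K"
proof -
  obtain i where i: "1 \<le> i" "i < length K" "d = sum_list (take i K)"
    using assms(2) unfolding Des_def by auto
  have pos: "0 < sum_list xs" if "xs \<noteq> []" "set xs \<subseteq> set K" for xs
    using that assms(1) by (auto simp: sum_list_eq_0_iff neq_Nil_conv)
  have "take i K \<noteq> []" "drop i K \<noteq> []"
    using i by auto
  then have "0 < sum_list (take i K)" "0 < sum_list (drop i K)"
    by (auto intro!: pos dest: in_set_takeD in_set_dropD)
  moreover have "sum_list K = sum_list (take i K) + sum_list (drop i K)"
    by (metis append_take_drop_id sum_list_append)
  ultimately show ?thesis using i by simp
qed

lemma Des_subset_if_composition: "K \<in> compositions n \<Longrightarrow> Des K \<subseteq> {1..<n}"
  unfolding compositions_def using Des_bounds by fastforce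

lemma Des_inject:
  assumes "\<forall>x\<in>set K. 0 < x" "\<forall>x\<in>set K'. 0 < x"
    and "sum_list K = sum_list K'" "Des K = Des K'"
  shows "K = K'"
  using assms
proof (induction K arbitrary: K')
  case Nil
  then show ?case by (cases K') auto
next
  case (Cons a K1)
  obtain b K1' where K': "K' = b # K1'"
    using Cons.prems by (cases K') auto
  have pos: "\<forall>x\<in>set K1. 0 < x" "\<forall>x\<in>set K1'. 0 < x"
    using Cons.prems(1,2) K' by auto
  show ?case
  proof (cases "K1 = [] \<or> K1' = []")
    case True
    then have "K1 = [] \<and> K1' = []"
      using Cons.prems(4) K' by (auto simp: Des_Cons split: if_splits)
    then show ?thesis using Cons.prems(3) K' by simp
  next
    case False
    have D: "insert a ((+) a ` Des K1) = insert b ((+) b ` Des K1')"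
      using Cons.prems(4) K' False by (simp add: Des_Cons)
    have "a \<in> insert b ((+) b ` Des K1')" "b \<in> insert a ((+) a ` Des K1)"
      using D by blast+
    then have ab: "a = b" by auto
    have "\<forall>x\<in>Des K1. 0 < x" "\<forall>x\<in>Des K1'. 0 < x"
      using Des_bounds pos by blast+
    then have "a \<notin> (+) a ` Des K1" "a \<notin> (+) a ` Des K1'"
      by auto
    then have "(+) a ` Des K1 = (+) a ` Des K1'"
      using D ab by (metis Diff_insert_absorb)
    then have "Des K1 = Des K1'"
      by (simp add: inj_image_eq_iff)
    then show ?thesis
      using Cons.IH[OF pos] Cons.prems(3) K' ab by simp
  qed
qed

lemma Des_surj: "E \<subseteq> {1..<n} \<Longrightarrow> \<exists>K\<in>compositions n. Des K = E"
proof (induction n arbitrary: E rule: less_induct)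
  case (less n)
  show ?case
  proof (cases "E = {}")
    case True
    show ?thesis
      by (rule bexI[of _ "if n = 0 then [] else [n]"]) (auto simp: True compositions_def Des_def)
  next
    case False
    define a where "a = Min E"
    have finE: "finite E" using less.prems finite_subset by auto
    have aE: "a \<in> E" and amin: "\<forall>x\<in>E. a \<le> x"
      using finE False by (simp_all add: a_def)
    have a: "1 \<le> a" "a < n" using aE less.prems by auto
    define E' where "E' = (\<lambda>x. x - a) ` (E - {a})"
    have "E' \<subseteq> {1..<n - a}"
      using amin less.prems unfolding E'_def by (auto simp: subset_iff intro!: diff_less_mono)
    then obtain K where K: "K \<in> compositions (n - a)" "Des K = E'"
      using less.IH[of "n - a" E'] a by auto
    have "K \<noteq> []" using K(1) a unfolding compositions_def by auto
    moreover have "(+) a ` E' = E - {a}"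
    proof -
      have "(+) a ` E' = (\<lambda>x. x) ` (E - {a})"
        unfolding E'_def image_image using amin by (intro image_cong) auto
      then show ?thesis by simp
    qed
    ultimately have "Des (a # K) = E"
      using aE K(2) by (auto simp: Des_Cons)
    moreover have "a # K \<in> compositions n"
      using K(1) a unfolding compositions_def by auto
    ultimately show ?thesis by blast
  qed
qed

lemma bij_betw_Des_compositions: "bij_betw Des (compositions n) (Pow {1..<n})"
proof (rule bij_betw_imageI)
  show "inj_on Des (compositions n)"
    unfolding inj_on_def compositions_def using Des_inject by auto
  show "Des ` compositions n = Pow {1..<n}"
    using Des_subset_if_composition Des_surj by blast
qed

lemma finite_compositions: "finite (compositions n)"
  using bij_betw_finite[OF bij_betw_Des_compositions] by simp

lemma card_compositions_Des:
  "card {K \<in> compositions n. Q (Des K)} = card {E. E \<subseteq> {1..<n} \<and> Q E}"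
proof (rule bij_betw_same_card, rule bij_betw_subset[OF bij_betw_Des_compositions])
  show "Des ` {K \<in> compositions n. Q (Des K)} = {E. E \<subseteq> {1..<n} \<and> Q E}"
  proof (intro equalityI subsetI)
    fix E assume "E \<in> {E. E \<subseteq> {1..<n} \<and> Q E}"
    then obtain K where "K \<in> compositions n" "Des K = E" "Q E"
      using Des_surj by blast
    then show "E \<in> Des ` {K \<in> compositions n. Q (Des K)}" by blast
  qed (use Des_subset_if_composition in fastforce)
qed auto

section \<open>Peak sets\<close>

definition peak_set :: "nat \<Rightarrow> nat set \<Rightarrow> bool" where
  "peak_set n P \<longleftrightarrow> P \<subseteq> {2..<n} \<and> (\<forall>p\<in>P. p + 1 \<notin> P)"

definition peaks :: "nat set \<Rightarrow> nat set" where
  "peaks D = {i \<in> D. i \<noteq> 1 \<and> i - 1 \<notin> D}"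

lemma peak_set_peaks: "D \<subseteq> {1..<n} \<Longrightarrow> peak_set n (peaks D)"
  unfolding peak_set_def peaks_def by fastforce

lemma peaks_peaks: "peaks (peaks D) = peaks D"
  unfolding peaks_def by auto

lemma HP_eq_peaks: "HP K = peaks (Des K)"
  unfolding HP_def peaks_def by simp

lemma peak_set_HP: "K \<in> compositions n \<Longrightarrow> peak_set n (HP K)"
  unfolding HP_eq_peaks by (rule peak_set_peaks[OF Des_subset_if_composition])

lemma tab_Peak_eq_peaks: "tab_Peak lam T = peaks (tab_Des lam T)"
  unfolding tab_Peak_def peaks_def by simp

section \<open>Fundamental quasisymmetric functions and \<open>\<Theta>\<^sub>P\<close> at a monomial\<close>

definition sorted_words :: "nat \<Rightarrow> (nat \<Rightarrow> nat) \<Rightarrow> (nat \<Rightarrow> nat) set" where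
  "sorted_words n \<alpha> = {f. (\<forall>j. j \<notin> {1..n} \<longrightarrow> f j = 0) \<and> (\<forall>j\<in>{1..<n}. f j \<le> f (j + 1))
      \<and> (\<forall>v. \<alpha> v = card {j \<in> {1..n}. f j = v})}"

definition ascents :: "nat \<Rightarrow> (nat \<Rightarrow> nat) \<Rightarrow> nat set" where
  "ascents n f = {j \<in> {1..<n}. f j < f (j + 1)}"

lemma weakly_increasing_le:
  fixes h :: "nat \<Rightarrow> 'a::order"
  assumes "\<forall>i\<in>{1..<n}. h i \<le> h (i + 1)" "1 \<le> i" "i \<le> j" "j \<le> n"
  shows "h i \<le> h j"
  by (rule lift_Suc_mono_le_ivl[of "{1..<n}"]) (use assms in auto)

lemma weakly_increasing_eq_if_same_content:
  fixes f g :: "nat \<Rightarrow> nat"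
  assumes f: "\<forall>i\<in>{1..<n}. f i \<le> f (i + 1)" and g: "\<forall>i\<in>{1..<n}. g i \<le> g (i + 1)"
    and content: "\<forall>v. card {i\<in>{1..n}. f i = v} = card {i\<in>{1..n}. g i = v}"
    and j: "j \<in> {1..n}"
  shows "f j = g j"
proof -
  have at_most: "card {i\<in>{1..n}. h i \<le> v} = (\<Sum>u\<le>v. card {i\<in>{1..n}. h i = u})"
    for h :: "nat \<Rightarrow> nat" and v
  proof -
    have "{i\<in>{1..n}. h i \<le> v} = (\<Union>u\<le>v. {i\<in>{1..n}. h i = u})" by auto
    then show ?thesis by (simp only:) (subst card_UN_disjoint, auto)
  qed
  have rank: "h j \<le> v \<longleftrightarrow> j \<le> card {i\<in>{1..n}. h i \<le> v}"
    if mono: "\<forall>i\<in>{1..<n}. h i \<le> h (i + 1)" for h :: "nat \<Rightarrow> nat" and v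
  proof
    assume "h j \<le> v"
    then have "{1..j} \<subseteq> {i\<in>{1..n}. h i \<le> v}"
      using weakly_increasing_le[OF mono] j by fastforce
    from card_mono[OF _ this] show "j \<le> card {i\<in>{1..n}. h i \<le> v}" by simp
  next
    assume le: "j \<le> card {i\<in>{1..n}. h i \<le> v}"
    show "h j \<le> v"
    proof (rule ccontr)
      assume "\<not> h j \<le> v"
      then have "{i\<in>{1..n}. h i \<le> v} \<subseteq> {1..<j}"
        using weakly_increasing_le[OF mono, of j] j by (force simp: not_less[symmetric])
      from card_mono[OF _ this] have "card {i\<in>{1..n}. h i \<le> v} \<le> j - 1" by simp
      moreover have "1 \<le> j" using j by simp
      ultimately show False using le by arith
    qed
  qed
  have "f j \<le> v \<longleftrightarrow> g j \<le> v" for v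
    using rank[OF f] rank[OF g] at_most content by simp
  then show ?thesis by (metis le_antisym order_refl)
qed

lemma sorted_wordsD:
  assumes "f \<in> sorted_words n \<alpha>"
  shows "\<forall>j. j \<notin> {1..n} \<longrightarrow> f j = 0" "\<forall>i\<in>{1..<n}. f i \<le> f (i + 1)"
    and "\<alpha> v = card {i\<in>{1..n}. f i = v}"
  using assms unfolding sorted_words_def by blast+

lemma sorted_words_unique:
  assumes f: "f \<in> sorted_words n \<alpha>" and g: "g \<in> sorted_words n \<alpha>"
  shows "f = g"
proof
  fix j
  have content: "\<forall>v. card {i\<in>{1..n}. f i = v} = card {i\<in>{1..n}. g i = v}"
  proof
    fix v
    show "card {i\<in>{1..n}. f i = v} = card {i\<in>{1..n}. g i = v}"
      using sorted_wordsD(3)[OF f, of v] sorted_wordsD(3)[OF g, of v] by simp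
  qed
  show "f j = g j"
  proof (cases "j \<in> {1..n}")
    case True
    then show ?thesis
      by (rule weakly_increasing_eq_if_same_content[OF sorted_wordsD(2)[OF f] sorted_wordsD(2)[OF g]
            content])
  qed (use sorted_wordsD(1)[OF f] sorted_wordsD(1)[OF g] in simp)
qed

lemma sorted_words_eq_singleton:
  assumes f: "f \<in> sorted_words n \<alpha>"
  shows "sorted_words n \<alpha> = {f}"
  using f sorted_words_unique[OF f] by blast

lemma Fq_eq_card_sorted_words:
  assumes "K \<in> compositions n"
  shows "Fq K \<alpha> = real (card {f \<in> sorted_words n \<alpha>. \<forall>j\<in>Des K. f j < f (j + 1)})"
proof -
  have n: "sum_list K = n" and D: "Des K \<subseteq> {1..<n}"
    using assms Des_subset_if_composition by (auto simp: compositions_def)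
  have "(\<forall>j\<in>{1..<n}. f j \<le> f (j + 1) \<and> (j \<in> Des K \<longrightarrow> f j < f (j + 1))) \<longleftrightarrow>
      (\<forall>j\<in>{1..<n}. f j \<le> f (j + 1)) \<and> (\<forall>j\<in>Des K. f j < f (j + 1))" for f :: "nat \<Rightarrow> nat"
    using D by blast
  then show ?thesis
    unfolding Fq_def n sorted_words_def mem_Collect_eq
    by (intro arg_cong[where f = "\<lambda>X. real (card X)"] Collect_cong) blast
qed

lemma Fq_at_sorted_word:
  assumes K: "K \<in> compositions n" and f: "f \<in> sorted_words n \<alpha>"
  shows "Fq K \<alpha> = of_bool (Des K \<subseteq> ascents n f)"
proof -
  have "(\<forall>j\<in>Des K. f j < f (j + 1)) \<longleftrightarrow> Des K \<subseteq> ascents n f"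
    using Des_subset_if_composition[OF K] unfolding ascents_def by blast
  then have "{g \<in> sorted_words n \<alpha>. \<forall>j\<in>Des K. g j < g (j + 1)} =
      (if Des K \<subseteq> ascents n f then {f} else {})"
    using sorted_words_eq_singleton[OF f] by auto
  then show ?thesis
    by (simp add: Fq_eq_card_sorted_words[OF K])
qed

lemma Theta_eq_0_if_no_sorted_word:
  assumes "sorted_words n \<alpha> = {}"
  shows "Theta n P \<alpha> = 0"
proof -
  have "Fq K \<alpha> = 0" if "K \<in> compositions n" for K
    using Fq_eq_card_sorted_words[OF that] assms by simp
  then show ?thesis unfolding Theta_def by simp
qed

lemma subset_symdiff_shift_iff:
  fixes P E :: "nat set"
  assumes "0 \<notin> P"
  shows "P \<subseteq> (E - (\<lambda>a. a + 1) ` E) \<union> ((\<lambda>a. a + 1) ` E - E) \<longleftrightarrow> (\<forall>p\<in>P. p \<in> E \<longleftrightarrow> p - 1 \<notin> E)"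
proof -
  have "p \<in> (\<lambda>a. a + 1) ` E \<longleftrightarrow> p - 1 \<in> E" if "p \<in> P" for p
  proof
    assume "p - 1 \<in> E"
    then have "p - 1 + 1 \<in> (\<lambda>a. a + 1) ` E" by (rule imageI)
    then show "p \<in> (\<lambda>a. a + 1) ` E" using that assms by (cases p) auto
  qed auto
  then show ?thesis by blast
qed

lemma card_double_if_flipping_involution:
  assumes "finite X" and "\<And>E. E \<in> X \<Longrightarrow> t E \<in> X" and "\<And>E. E \<in> X \<Longrightarrow> t (t E) = E"
    and "\<And>E. E \<in> X \<Longrightarrow> Q (t E) \<longleftrightarrow> \<not> Q E"
  shows "card X = 2 * card {E\<in>X. Q E}"
proof -
  have "bij_betw t {E\<in>X. Q E} {E\<in>X. \<not> Q E}"
    by (rule bij_betw_byWitness[where f' = t]) (use assms in auto)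
  then have "card {E\<in>X. Q E} = card {E\<in>X. \<not> Q E}"
    by (rule bij_betw_same_card)
  moreover have "card X = card {E\<in>X. Q E} + card {E\<in>X. \<not> Q E}"
    using assms(1) by (subst card_Un_disjoint[symmetric]) (auto intro: arg_cong[where f = card])
  ultimately show ?thesis by simp
qed

definition peak_compatible_subsets :: "nat set \<Rightarrow> nat set \<Rightarrow> nat set set" where
  "peak_compatible_subsets S P = {E. E \<subseteq> S \<and> (\<forall>p\<in>P. p \<in> E \<longleftrightarrow> p - 1 \<notin> E)}"

lemma card_peak_compatible_subsets_insert:
  assumes "finite S" and x: "x \<in> S" "x = p \<or> x = p - 1" and "p \<noteq> 0"
    and x_free: "\<forall>q\<in>P. x \<noteq> q \<and> x \<noteq> q - 1"
  shows "card (peak_compatible_subsets S P) = 2 * card (peak_compatible_subsets S (insert p P))"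
proof -
  have "peak_compatible_subsets S (insert p P) =
      {E \<in> peak_compatible_subsets S P. p \<in> E \<longleftrightarrow> p - 1 \<notin> E}"
    unfolding peak_compatible_subsets_def by auto
  moreover
  txt \<open>Toggling \<open>x\<close> flips the condition at \<open>p\<close> and, by \<open>x_free\<close>, no other one.\<close>
  define t where "t E = (if x \<in> E then E - {x} else insert x E)" for E
  have "card (peak_compatible_subsets S P) =
      2 * card {E \<in> peak_compatible_subsets S P. p \<in> E \<longleftrightarrow> p - 1 \<notin> E}"
  proof (rule card_double_if_flipping_involution)
    show "finite (peak_compatible_subsets S P)"
      unfolding peak_compatible_subsets_def
      by (rule finite_subset[of _ "Pow S"]) (auto simp: assms(1))
    fix E assume E: "E \<in> peak_compatible_subsets S P"
    have "t E \<subseteq> S" "\<forall>q\<in>P. q \<in> t E \<longleftrightarrow> q \<in> E" "\<forall>q\<in>P. q - 1 \<in> t E \<longleftrightarrow> q - 1 \<in> E"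
      using E x(1) x_free unfolding peak_compatible_subsets_def t_def by auto
    then show "t E \<in> peak_compatible_subsets S P"
      using E unfolding peak_compatible_subsets_def by simp
    show "t (t E) = E" unfolding t_def by auto
    show "(p \<in> t E \<longleftrightarrow> p - 1 \<notin> t E) \<longleftrightarrow> \<not> (p \<in> E \<longleftrightarrow> p - 1 \<notin> E)"
      using x(2) \<open>p \<noteq> 0\<close> unfolding t_def by auto
  qed
  ultimately show ?thesis by simp
qed

lemma card_peak_compatible_subsets:
  assumes "finite P" "finite S" "0 \<notin> P" "\<forall>p\<in>P. p + 1 \<notin> P"
  shows "2 ^ card P * card (peak_compatible_subsets S P) =
    (if \<forall>p\<in>P. p \<in> S \<or> p - 1 \<in> S then 2 ^ card S else 0)"
  using assms
proof (induction P rule: finite_induct)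
  case empty
  have "peak_compatible_subsets S {} = Pow S"
    unfolding peak_compatible_subsets_def by auto
  then show ?case using empty by (simp add: card_Pow)
next
  case (insert p P)
  have IH: "2 ^ card P * card (peak_compatible_subsets S P) =
      (if \<forall>p\<in>P. p \<in> S \<or> p - 1 \<in> S then 2 ^ card S else 0)"
    using insert by simp
  show ?case
  proof (cases "p \<in> S \<or> p - 1 \<in> S")
    case True
    then obtain x where x: "x \<in> S" "x = p \<or> x = p - 1" by blast
    have "p \<noteq> 0" "0 \<notin> P" "p + 1 \<notin> P" "p \<notin> P"
      using insert.prems(2,3) insert.hyps(2) by auto
    moreover have "p - 1 \<notin> P"
    proof
      assume "p - 1 \<in> P"
      then have "p - 1 + 1 \<notin> insert p P" using insert.prems(3) by blast
      then show False using \<open>p \<noteq> 0\<close> by simp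
    qed
    ultimately have "x \<noteq> q \<and> x \<noteq> q - 1" if "q \<in> P" for q
      using x that by (cases q) auto
    then have "card (peak_compatible_subsets S P) = 2 * card (peak_compatible_subsets S (insert p P))"
      using card_peak_compatible_subsets_insert[OF insert.prems(1) x \<open>p \<noteq> 0\<close>] by simp
    then show ?thesis
      using IH True insert.hyps by simp
  next
    case False
    then have "peak_compatible_subsets S (insert p P) = {}"
      unfolding peak_compatible_subsets_def by auto
    then show ?thesis using False by simp
  qed
qed

lemma Theta_at_sorted_word:
  assumes f: "f \<in> sorted_words n \<alpha>" and P: "peak_set n P"
  shows "Theta n P \<alpha> = (if \<forall>p\<in>P. p \<in> ascents n f \<or> p - 1 \<in> ascents n f
                         then 2 ^ (card (ascents n f) + 1) else 0)"
proof -
  let ?A = "ascents n f"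
  let ?Q = "\<lambda>E. (\<forall>p\<in>P. p \<in> E \<longleftrightarrow> p - 1 \<notin> E) \<and> E \<subseteq> ?A"
  let ?Ks = "{K \<in> compositions n. P \<subseteq> (Des K - (\<lambda>a. a + 1) ` Des K) \<union> ((\<lambda>a. a + 1) ` Des K - Des K)}"
  have P0: "0 \<notin> P" and finP: "finite P" and finA: "finite ?A" and A: "?A \<subseteq> {1..<n}"
    using P by (auto simp: peak_set_def ascents_def intro: finite_subset)
  have "(\<Sum>K\<in>?Ks. Fq K \<alpha>) = (\<Sum>K\<in>?Ks. of_bool (Des K \<subseteq> ?A))"
    using Fq_at_sorted_word[OF _ f] by (intro sum.cong) auto
  also have "\<dots> = real (card (?Ks \<inter> {K. Des K \<subseteq> ?A}))"
    using finite_compositions by (intro sum_of_bool_eq) auto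
  also have "?Ks \<inter> {K. Des K \<subseteq> ?A} = {K \<in> compositions n. ?Q (Des K)}"
    using subset_symdiff_shift_iff[OF P0] by blast
  also have "card \<dots> = card {E. E \<subseteq> {1..<n} \<and> ?Q E}"
    by (rule card_compositions_Des)
  also have "{E. E \<subseteq> {1..<n} \<and> ?Q E} = peak_compatible_subsets ?A P"
    unfolding peak_compatible_subsets_def using A by blast
  finally have "Theta n P \<alpha> = 2 * real (2 ^ card P * card (peak_compatible_subsets ?A P))"
    unfolding Theta_def by simp
  moreover have "2 ^ card P * card (peak_compatible_subsets ?A P) =
      (if \<forall>p\<in>P. p \<in> ?A \<or> p - 1 \<in> ?A then 2 ^ card ?A else 0)"
    using card_peak_compatible_subsets[OF finP finA P0] P by (simp add: peak_set_def)
  ultimately show ?thesis by simp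
qed

section \<open>Marked words\<close>

text \<open>Letters are coded as in \<open>marked_shifted_tableaux\<close>. These are the words \<open>w\<close> for which
  \<open>w \<circ> S\<close> is a marked shifted tableau, \<open>S\<close> being a standard tableau with descent set \<open>D\<close>.\<close>
definition marked_words :: "nat \<Rightarrow> nat set \<Rightarrow> (nat \<Rightarrow> nat) \<Rightarrow> (nat \<Rightarrow> nat) set" where
  "marked_words n D \<alpha> = {w. (\<forall>j. j \<notin> {1..n} \<longrightarrow> w j = 0) \<and> (\<forall>j\<in>{1..n}. 0 < w j)
     \<and> (\<forall>j\<in>{1..<n}. w j \<le> w (j + 1) \<and> (w j = w (j + 1) \<longrightarrow> (even (w j) \<longleftrightarrow> j \<notin> D)))
     \<and> (\<forall>v. \<alpha> v = card {j \<in> {1..n}. (w j - 1) div 2 = v})}"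

lemma marked_wordsD:
  assumes "w \<in> marked_words n D \<alpha>"
  shows "\<forall>j. j \<notin> {1..n} \<longrightarrow> w j = 0" "\<forall>j\<in>{1..n}. 0 < w j" "\<forall>j\<in>{1..<n}. w j \<le> w (j + 1)"
    and "\<forall>j\<in>{1..<n}. w j = w (j + 1) \<longrightarrow> (even (w j) \<longleftrightarrow> j \<notin> D)"
    and "\<alpha> v = card {j \<in> {1..n}. (w j - 1) div 2 = v}"
  using assms unfolding marked_words_def by blast+

definition unmarked :: "nat \<Rightarrow> (nat \<Rightarrow> nat) \<Rightarrow> nat \<Rightarrow> nat" where
  "unmarked n w j = (if j \<in> {1..n} then (w j - 1) div 2 else 0)"

definition marking :: "nat \<Rightarrow> (nat \<Rightarrow> nat) \<Rightarrow> nat set \<Rightarrow> nat \<Rightarrow> nat" where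
  "marking n f A j = (if j \<in> {1..n} then 2 * f j + (if j \<in> A then 1 else 2) else 0)"

lemma unmarked_in_sorted_words:
  assumes w: "w \<in> marked_words n D \<alpha>"
  shows "unmarked n w \<in> sorted_words n \<alpha>"
proof -
  have "\<forall>j\<in>{1..<n}. unmarked n w j \<le> unmarked n w (j + 1)"
    using marked_wordsD(3)[OF w] by (auto simp: unmarked_def intro: div_le_mono diff_le_mono)
  moreover have "\<alpha> v = card {j \<in> {1..n}. unmarked n w j = v}" for v
  proof -
    have "{j \<in> {1..n}. unmarked n w j = v} = {j \<in> {1..n}. (w j - 1) div 2 = v}"
      by (auto simp: unmarked_def)
    then show ?thesis using marked_wordsD(5)[OF w, of v] by simp
  qed
  ultimately show ?thesis
    unfolding sorted_words_def by (auto simp: unmarked_def)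
qed

lemma inj_on_marking: "inj_on (marking n f) (Pow {1..n})"
  by (rule inj_on_inverseI[where g = "\<lambda>w. {j \<in> {1..n}. odd (w j)}"]) (auto simp: marking_def)

text \<open>A marked word is a sorted word \<open>f\<close> together with the set \<open>A\<close> of positions carrying
  primed letters (see \<open>marking\<close>). Within a run of equal letters of \<open>f\<close>, i.e. across positions
  \<open>j \<notin> S\<close>, primed letters must precede unprimed ones, and two equal neighbours are primed
  exactly when \<open>j \<in> D\<close>.\<close>
definition compatible_marks :: "nat \<Rightarrow> nat set \<Rightarrow> nat set \<Rightarrow> nat set \<Rightarrow> bool" where
  "compatible_marks n S D A \<longleftrightarrow> (\<forall>j\<in>{1..<n}. j \<notin> S \<longrightarrow>
      (j + 1 \<in> A \<longrightarrow> j \<in> A) \<and> ((j \<in> A \<longleftrightarrow> j + 1 \<in> A) \<longrightarrow> (j \<in> A \<longleftrightarrow> j \<in> D)))"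

lemma marked_word_eq_marking:
  assumes f: "f \<in> sorted_words n \<alpha>" and w: "w \<in> marked_words n D \<alpha>"
  defines "A \<equiv> {j \<in> {1..n}. odd (w j)}"
  shows "w = marking n f A" and "compatible_marks n (ascents n f) D A"
proof -
  have f_eq: "f = unmarked n w"
    using sorted_words_unique[OF f unmarked_in_sorted_words[OF w]] .
  have w_eq: "w j = 2 * f j + (if j \<in> A then 1 else 2)" if "j \<in> {1..n}" for j
  proof -
    have "0 < w j" using marked_wordsD(2)[OF w] that by blast
    then show ?thesis
      using that unfolding f_eq unmarked_def A_def by (auto elim!: oddE evenE)
  qed
  then show "w = marking n f A"
    using marked_wordsD(1)[OF w] by (auto simp: marking_def)
  show "compatible_marks n (ascents n f) D A"
    unfolding compatible_marks_def
  proof (intro ballI impI)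
    fix j assume j: "j \<in> {1..<n}" and "j \<notin> ascents n f"
    then have "f (j + 1) = f j"
      using sorted_wordsD(2)[OF f] j by (force simp: ascents_def)
    moreover have "w j \<le> w (j + 1)" "w j = w (j + 1) \<longrightarrow> (even (w j) \<longleftrightarrow> j \<notin> D)"
      using marked_wordsD(3,4)[OF w] j by blast+
    ultimately show "(j + 1 \<in> A \<longrightarrow> j \<in> A) \<and> ((j \<in> A \<longleftrightarrow> j + 1 \<in> A) \<longrightarrow> (j \<in> A \<longleftrightarrow> j \<in> D))"
      using j w_eq[of j] w_eq[of "j + 1"] by (auto split: if_splits)
  qed
qed

lemma marking_in_marked_words:
  assumes f: "f \<in> sorted_words n \<alpha>" and A: "compatible_marks n (ascents n f) D A"
  shows "marking n f A \<in> marked_words n D \<alpha>"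
proof -
  let ?w = "marking n f A"
  have w_eq: "?w j = 2 * f j + (if j \<in> A then 1 else 2)" if "j \<in> {1..n}" for j
    using that unfolding marking_def by simp
  have "?w j \<le> ?w (j + 1) \<and> (?w j = ?w (j + 1) \<longrightarrow> (even (?w j) \<longleftrightarrow> j \<notin> D))" if j: "j \<in> {1..<n}" for j
  proof (cases "j \<in> ascents n f")
    case True
    then show ?thesis using j w_eq[of j] w_eq[of "j + 1"] by (auto simp: ascents_def)
  next
    case False
    then have "f (j + 1) = f j"
      using sorted_wordsD(2)[OF f] j by (force simp: ascents_def)
    then show ?thesis
      using A False j w_eq[of j] w_eq[of "j + 1"] unfolding compatible_marks_def
      by (auto split: if_splits)
  qed
  moreover have "\<alpha> v = card {j \<in> {1..n}. (?w j - 1) div 2 = v}" for v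
    using sorted_wordsD(3)[OF f, of v] w_eq by (auto intro!: arg_cong[where f = card])
  ultimately show ?thesis
    unfolding marked_words_def using w_eq by (auto simp: marking_def)
qed

lemma marked_words_eq_image:
  assumes f: "f \<in> sorted_words n \<alpha>"
  shows "marked_words n D \<alpha> = marking n f ` {A. A \<subseteq> {1..n} \<and> compatible_marks n (ascents n f) D A}"
proof (intro equalityI subsetI)
  fix w assume "w \<in> marked_words n D \<alpha>"
  then show "w \<in> marking n f ` {A. A \<subseteq> {1..n} \<and> compatible_marks n (ascents n f) D A}"
    using marked_word_eq_marking[OF f] by blast
qed (use marking_in_marked_words[OF f] in blast)

lemma finite_marked_words: "finite (marked_words n D \<alpha>)"
proof (cases "sorted_words n \<alpha> = {}")
  case True
  then have "marked_words n D \<alpha> = {}"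
    using unmarked_in_sorted_words by blast
  then show ?thesis by simp
next
  case False
  then obtain f where "f \<in> sorted_words n \<alpha>" by blast
  then show ?thesis
    by (simp add: marked_words_eq_image)
qed

definition compatible_link :: "nat \<Rightarrow> nat set \<Rightarrow> nat set \<Rightarrow> bool \<Rightarrow> bool \<Rightarrow> bool" where
  "compatible_link j S D b b' \<longleftrightarrow> j \<in> S \<or> ((b' \<longrightarrow> b) \<and> ((b \<longleftrightarrow> b') \<longrightarrow> (b \<longleftrightarrow> j \<in> D)))"

definition marks_ending :: "nat \<Rightarrow> nat set \<Rightarrow> nat set \<Rightarrow> bool \<Rightarrow> nat set set" where
  "marks_ending n S D b = {A. A \<subseteq> {1..n} \<and> compatible_marks n S D A \<and> (n \<in> A \<longleftrightarrow> b)}"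

lemma compatible_marks_Suc:
  assumes "A \<subseteq> {1..n}" "1 \<le> n"
  shows "compatible_marks (Suc n) S D (if b then insert (Suc n) A else A) \<longleftrightarrow>
         compatible_marks n S D A \<and> compatible_link n S D (n \<in> A) b"
proof -
  let ?B = "if b then insert (Suc n) A else A"
  have same: "j \<in> ?B \<longleftrightarrow> j \<in> A" if "j \<le> n" for j
    using that by auto
  have "Suc n \<in> ?B \<longleftrightarrow> b"
    using assms(1) by auto
  moreover have "compatible_marks (Suc n) S D ?B \<longleftrightarrow> compatible_marks n S D ?B \<and> (n \<notin> S \<longrightarrow>
      (n + 1 \<in> ?B \<longrightarrow> n \<in> ?B) \<and> ((n \<in> ?B \<longleftrightarrow> n + 1 \<in> ?B) \<longrightarrow> (n \<in> ?B \<longleftrightarrow> n \<in> D)))"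
    unfolding compatible_marks_def using assms(2) by (auto simp: less_Suc_eq)
  moreover have "compatible_marks n S D ?B \<longleftrightarrow> compatible_marks n S D A"
    unfolding compatible_marks_def using same by (auto simp del: One_nat_def)
  ultimately show ?thesis
    using same[of n] unfolding compatible_link_def by auto
qed

lemma card_marks_ending_Suc:
  assumes "1 \<le> n"
  shows "card (marks_ending (Suc n) S D b) =
    (if compatible_link n S D True b then card (marks_ending n S D True) else 0) +
    (if compatible_link n S D False b then card (marks_ending n S D False) else 0)"
proof -
  define ext where "ext A = (if b then insert (Suc n) A else A)" for A
  let ?X = "\<Union>a\<in>{a. compatible_link n S D a b}. marks_ending n S D a"
  have "inj_on ext (Pow {1..n})"
    by (rule inj_on_inverseI[where g = "\<lambda>B. B - {Suc n}"]) (auto simp: ext_def)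
  then have inj: "inj_on ext ?X"
    by (rule inj_on_subset) (auto simp: marks_ending_def)
  have "marks_ending (Suc n) S D b = ext ` ?X"
  proof (intro equalityI subsetI)
    fix B assume B: "B \<in> marks_ending (Suc n) S D b"
    let ?A = "B - {Suc n}"
    have A: "?A \<subseteq> {1..n}" and B_eq: "B = ext ?A"
      using B by (auto simp: marks_ending_def ext_def)
    then have "compatible_marks n S D ?A \<and> compatible_link n S D (n \<in> ?A) b"
      using B compatible_marks_Suc[OF A assms, of S D b] by (simp add: marks_ending_def ext_def)
    then have "?A \<in> ?X"
      using A by (auto simp: marks_ending_def)
    then show "B \<in> ext ` ?X"
      using B_eq by blast
  next
    fix B assume "B \<in> ext ` ?X"
    then obtain A a where A: "A \<in> marks_ending n S D a" "compatible_link n S D a b" "B = ext A"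
      by blast
    then have "A \<subseteq> {1..n}" "compatible_marks (Suc n) S D B"
      using compatible_marks_Suc[of A n S D b] assms by (auto simp: marks_ending_def ext_def)
    then show "B \<in> marks_ending (Suc n) S D b"
      using A by (auto simp: marks_ending_def ext_def)
  qed
  also have "card (ext ` ?X) = card ?X"
    by (rule card_image[OF inj])
  also have "\<dots> = (\<Sum>a\<in>{a. compatible_link n S D a b}. card (marks_ending n S D a))"
    by (rule card_UN_disjoint) (auto simp: marks_ending_def)
  also have "\<dots> = (\<Sum>a\<in>UNIV. if compatible_link n S D a b then card (marks_ending n S D a) else 0)"
    by (simp add: sum.If_cases Int_def)
  finally show ?thesis
    by (simp add: UNIV_bool add.commute)
qed

text \<open>Solution of the two-state recursion \<open>card_marks_ending_Suc\<close>.\<close>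
lemma card_marks_ending:
  assumes "1 \<le> n"
  shows "card (marks_ending n S D True) =
      (if (\<forall>p\<in>peaks D. p < n \<longrightarrow> p \<in> S \<or> p - 1 \<in> S) \<and> (n = 1 \<or> n - 1 \<in> D \<or> n - 1 \<in> S)
       then 2 ^ card (S \<inter> {1..<n}) else 0) \<and>
    card (marks_ending n S D False) =
      (if \<forall>p\<in>peaks D. p < n \<longrightarrow> p \<in> S \<or> p - 1 \<in> S
       then if n = 1 \<or> n - 1 \<in> D \<or> n - 1 \<in> S then 2 ^ card (S \<inter> {1..<n})
            else 2 ^ (card (S \<inter> {1..<n}) + 1)
       else 0)"
  using assms
proof (induction n rule: nat_induct_at_least)
  case base
  have "marks_ending 1 S D True = {{1}}" "marks_ending 1 S D False = {{}}"
    unfolding marks_ending_def compatible_marks_def by auto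
  then show ?case by (auto simp: peaks_def)
next
  case (Suc n)
  have k: "card (S \<inter> {1..<Suc n}) = (if n \<in> S then Suc (card (S \<inter> {1..<n})) else card (S \<inter> {1..<n}))"
  proof -
    have "S \<inter> {1..<Suc n} = (if n \<in> S then insert n (S \<inter> {1..<n}) else S \<inter> {1..<n})"
      using Suc.hyps by (auto simp: less_Suc_eq)
    then show ?thesis by simp
  qed
  have cov: "(\<forall>p\<in>peaks D. p < Suc n \<longrightarrow> p \<in> S \<or> p - 1 \<in> S) \<longleftrightarrow>
      (\<forall>p\<in>peaks D. p < n \<longrightarrow> p \<in> S \<or> p - 1 \<in> S) \<and> (n \<in> peaks D \<longrightarrow> n \<in> S \<or> n - 1 \<in> S)"
    by (auto simp: less_Suc_eq)
  note step = card_marks_ending_Suc[OF Suc.hyps, of S D]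
  consider "n \<in> S" | "n \<notin> S" "n \<in> D" | "n \<notin> S" "n \<notin> D" by blast
  then show ?case
    by cases (use Suc.IH Suc.hyps step k cov in \<open>auto simp: compatible_link_def peaks_def\<close>)
qed

lemma card_compatible_marks:
  assumes "1 \<le> n" "S \<subseteq> {1..<n}" "D \<subseteq> {1..<n}"
  shows "card {A. A \<subseteq> {1..n} \<and> compatible_marks n S D A} =
    (if \<forall>p\<in>peaks D. p \<in> S \<or> p - 1 \<in> S then 2 ^ (card S + 1) else 0)"
proof -
  have "{A. A \<subseteq> {1..n} \<and> compatible_marks n S D A} = marks_ending n S D True \<union> marks_ending n S D False"
    unfolding marks_ending_def by auto
  also have "card \<dots> = card (marks_ending n S D True) + card (marks_ending n S D False)"
  proof (rule card_Un_disjoint)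
    show "finite (marks_ending n S D b)" for b
      by (rule finite_subset[of _ "Pow {1..n}"]) (auto simp: marks_ending_def)
  qed (auto simp: marks_ending_def)
  finally have "card {A. A \<subseteq> {1..n} \<and> compatible_marks n S D A} =
      card (marks_ending n S D True) + card (marks_ending n S D False)" .
  moreover have "S \<inter> {1..<n} = S" "\<forall>p\<in>peaks D. p < n"
    using assms(2,3) by (auto simp: peaks_def)
  ultimately show ?thesis
    using card_marks_ending[OF assms(1), of S D] by auto
qed

lemma card_marked_words:
  assumes n: "1 \<le> n" and D: "D \<subseteq> {1..<n}"
  shows "real (card (marked_words n D \<alpha>)) = Theta n (peaks D) \<alpha>"
proof (cases "sorted_words n \<alpha> = {}")
  case True
  then have "marked_words n D \<alpha> = {}"
    using unmarked_in_sorted_words by blast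
  then show ?thesis
    using Theta_eq_0_if_no_sorted_word[OF True] by simp
next
  case False
  then obtain f where f: "f \<in> sorted_words n \<alpha>" by blast
  have A: "ascents n f \<subseteq> {1..<n}" by (auto simp: ascents_def)
  have "card (marked_words n D \<alpha>) = card {A. A \<subseteq> {1..n} \<and> compatible_marks n (ascents n f) D A}"
    unfolding marked_words_eq_image[OF f]
    by (rule card_image, rule inj_on_subset[OF inj_on_marking]) auto
  also have "\<dots> = (if \<forall>p\<in>peaks D. p \<in> ascents n f \<or> p - 1 \<in> ascents n f
                   then 2 ^ (card (ascents n f) + 1) else 0)"
    by (rule card_compatible_marks[OF n A D])
  finally show ?thesis
    using Theta_at_sorted_word[OF f peak_set_peaks[OF D]] by simp
qed

section \<open>Linear independence of the \<open>\<Theta>\<^sub>P\<close>\<close>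

definition peak_word :: "nat \<Rightarrow> nat set \<Rightarrow> nat \<Rightarrow> nat" where
  "peak_word n P j = (if j \<in> {1..n} then card {p \<in> P. p < j} else 0)"

definition peak_monomial :: "nat \<Rightarrow> nat set \<Rightarrow> nat \<Rightarrow> nat" where
  "peak_monomial n P v = card {j \<in> {1..n}. peak_word n P j = v}"

lemma peak_word_Suc:
  assumes "finite P" "j \<in> {1..<n}"
  shows "peak_word n P (j + 1) = (if j \<in> P then peak_word n P j + 1 else peak_word n P j)"
proof -
  have "{p \<in> P. p < j + 1} = (if j \<in> P then insert j {p \<in> P. p < j} else {p \<in> P. p < j})"
    by (auto simp: less_Suc_eq)
  then show ?thesis
    using assms by (simp add: peak_word_def)
qed

lemma peak_word_sorted:
  assumes "P \<subseteq> {1..<n}"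
  shows "peak_word n P \<in> sorted_words n (peak_monomial n P)" and "ascents n (peak_word n P) = P"
proof -
  have fin: "finite P" using assms finite_subset by blast
  have "\<forall>j\<in>{1..<n}. peak_word n P j \<le> peak_word n P (j + 1)"
    using peak_word_Suc[OF fin] by simp
  moreover have "\<forall>j. j \<notin> {1..n} \<longrightarrow> peak_word n P j = 0"
    by (simp add: peak_word_def)
  ultimately show "peak_word n P \<in> sorted_words n (peak_monomial n P)"
    unfolding sorted_words_def by (simp add: peak_monomial_def)
  show "ascents n (peak_word n P) = P"
    using peak_word_Suc[OF fin] assms unfolding ascents_def by (auto split: if_splits)
qed

lemma Theta_at_peak_monomial:
  assumes P: "peak_set n P" and Q: "peak_set n Q"
  shows "Theta n Q (peak_monomial n P) = (if \<forall>q\<in>Q. q \<in> P \<or> q - 1 \<in> P then 2 ^ (card P + 1) else 0)"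
proof -
  have "P \<subseteq> {1..<n}" using P by (auto simp: peak_set_def)
  then show ?thesis
    using Theta_at_sorted_word[OF peak_word_sorted(1) Q] peak_word_sorted(2) by simp
qed

definition peak_weight :: "nat \<Rightarrow> nat set \<Rightarrow> nat" where
  "peak_weight n Q = (\<Sum>q\<in>Q. n - q)"

lemma inj_on_shift_outside:
  assumes "peak_set n Q"
  shows "inj_on (\<lambda>q. if q \<in> P then q else q - 1) Q"
proof (rule inj_onI)
  fix x y assume "x \<in> Q" "y \<in> Q" "(if x \<in> P then x else x - 1) = (if y \<in> P then y else y - 1)"
  moreover have "x \<noteq> 0" "y \<noteq> 0" "x + 1 \<notin> Q" "y + 1 \<notin> Q"
    using \<open>x \<in> Q\<close> \<open>y \<in> Q\<close> assms by (auto simp: peak_set_def)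
  ultimately show "x = y" by (auto split: if_splits)
qed

text \<open>If every point of \<open>Q\<close> is covered by \<open>P\<close>, moving each \<open>q \<notin> P\<close> to \<open>q - 1\<close> embeds \<open>Q\<close>
  into \<open>P\<close> without increasing any point.\<close>
lemma peak_weight_less:
  assumes P: "peak_set n P" and Q: "peak_set n Q"
    and cover: "\<forall>q\<in>Q. q \<in> P \<or> q - 1 \<in> P" and "Q \<noteq> P"
  shows "peak_weight n Q < peak_weight n P"
proof -
  have finP: "finite P" and finQ: "finite Q" and "P \<subseteq> {2..<n}" "Q \<subseteq> {2..<n}"
    using P Q by (auto simp: peak_set_def intro: finite_subset)
  define g where "g q = (if q \<in> P then q else q - 1)" for q
  have gP: "g ` Q \<subseteq> P" and g_le: "\<forall>q\<in>Q. g q \<le> q"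
    using cover unfolding g_def by auto
  have "inj_on g Q"
    unfolding g_def by (rule inj_on_shift_outside[OF Q])
  have reindex: "(\<Sum>q\<in>Q. n - g q) = (\<Sum>p\<in>g ` Q. n - p)"
    using sum.reindex[OF \<open>inj_on g Q\<close>, of "\<lambda>p. n - p"] by (simp add: comp_def)
  have image_le: "(\<Sum>p\<in>g ` Q. n - p) \<le> peak_weight n P"
    unfolding peak_weight_def using finP gP by (intro sum_mono2) auto
  show ?thesis
  proof (cases "\<exists>q\<in>Q. g q < q")
    case True
    then obtain q where q: "q \<in> Q" "g q < q" by blast
    moreover have "q < n" using q(1) \<open>Q \<subseteq> {2..<n}\<close> by auto
    ultimately have "n - q < n - g q" by simp
    then have "peak_weight n Q < (\<Sum>q\<in>Q. n - g q)"
      unfolding peak_weight_def using finQ g_le q(1)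
      by (intro sum_strict_mono_ex1) (auto intro!: diff_le_mono2)
    then show ?thesis
      using reindex image_le by simp
  next
    case False
    have "Q \<subseteq> P"
    proof
      fix q assume "q \<in> Q"
      then have "q \<noteq> 0" "\<not> g q < q" using False \<open>Q \<subseteq> {2..<n}\<close> by auto
      then show "q \<in> P" unfolding g_def by (auto split: if_splits)
    qed
    then obtain p where p: "p \<in> P" "p \<notin> Q" using \<open>Q \<noteq> P\<close> by blast
    have "peak_weight n Q < peak_weight n Q + (n - p)"
      using p \<open>P \<subseteq> {2..<n}\<close> by auto
    also have "\<dots> = (\<Sum>q\<in>insert p Q. n - q)"
      using finQ p unfolding peak_weight_def by simp
    also have "\<dots> \<le> peak_weight n P"
      unfolding peak_weight_def using finP p \<open>Q \<subseteq> P\<close> by (intro sum_mono2) auto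
    finally show ?thesis .
  qed
qed

text \<open>Evaluating at the monomial of a \<open>P\<close> of least weight among those with \<open>c P \<noteq> 0\<close>
  isolates the term \<open>c P * \<Theta>\<^sub>P\<close>.\<close>
lemma Theta_linear_independent:
  assumes fin: "finite \<P>" and peak_sets: "\<forall>P\<in>\<P>. peak_set n P"
    and zero: "\<forall>\<alpha>. (\<Sum>P\<in>\<P>. c P * Theta n P \<alpha>) = 0"
  shows "\<forall>P\<in>\<P>. c P = 0"
proof (rule ccontr)
  assume "\<not> (\<forall>P\<in>\<P>. c P = 0)"
  then obtain P where "P \<in> \<P>" "c P \<noteq> 0" by blast
  then obtain P0 where P0: "P0 \<in> \<P>" "c P0 \<noteq> 0"
    and min: "\<And>Q. Q \<in> \<P> \<Longrightarrow> c Q \<noteq> 0 \<Longrightarrow> peak_weight n P0 \<le> peak_weight n Q"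
    using ex_has_least_nat[of "\<lambda>Q. Q \<in> \<P> \<and> c Q \<noteq> 0" P "peak_weight n"] by blast
  let ?\<alpha> = "peak_monomial n P0"
  have others: "c Q * Theta n Q ?\<alpha> = 0" if "Q \<in> \<P> - {P0}" for Q
  proof (rule ccontr)
    assume "c Q * Theta n Q ?\<alpha> \<noteq> 0"
    then have "c Q \<noteq> 0" "\<forall>q\<in>Q. q \<in> P0 \<or> q - 1 \<in> P0"
      using Theta_at_peak_monomial peak_sets P0(1) that by (auto split: if_splits)
    then show False
      using peak_weight_less[of n P0 Q] min[of Q] peak_sets P0(1) that by fastforce
  qed
  have "(\<Sum>P\<in>\<P> - {P0}. c P * Theta n P ?\<alpha>) = 0"
    by (rule sum.neutral) (use others in blast)
  then have "(\<Sum>P\<in>\<P>. c P * Theta n P ?\<alpha>) = c P0 * Theta n P0 ?\<alpha>"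
    using sum.remove[OF fin P0(1), of "\<lambda>P. c P * Theta n P ?\<alpha>"] by simp
  also have "\<dots> \<noteq> 0"
    using P0 Theta_at_peak_monomial[of n P0 P0] peak_sets by simp
  finally show False using zero by simp
qed

lemma Theta_expansion_unique:
  assumes "C \<subseteq> compositions n" and "inj_on HP C"
  shows "(\<forall>\<alpha>. (\<Sum>I\<in>C. a I * Theta n (HP I) \<alpha>) = (\<Sum>I\<in>C. b I * Theta n (HP I) \<alpha>))
     \<longleftrightarrow> (\<forall>I\<in>C. a I = b I)"
proof
  assume eq: "\<forall>\<alpha>. (\<Sum>I\<in>C. a I * Theta n (HP I) \<alpha>) = (\<Sum>I\<in>C. b I * Theta n (HP I) \<alpha>)"
  define c where "c P = a (the_inv_into C HP P) - b (the_inv_into C HP P)" for P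
  have finC: "finite C"
    using assms(1) finite_compositions finite_subset by blast
  have "(\<Sum>P\<in>HP ` C. c P * Theta n P \<alpha>) = 0" for \<alpha>
  proof -
    have "(\<Sum>P\<in>HP ` C. c P * Theta n P \<alpha>) = (\<Sum>I\<in>C. (a I - b I) * Theta n (HP I) \<alpha>)"
      using assms(2) by (simp add: sum.reindex c_def the_inv_into_f_f)
    also have "\<dots> = 0"
      using eq by (simp add: left_diff_distrib sum_subtractf)
    finally show ?thesis .
  qed
  then have "\<forall>P\<in>HP ` C. c P = 0"
    using Theta_linear_independent[of "HP ` C" n c] finC peak_set_HP assms(1) by blast
  then show "\<forall>I\<in>C. a I = b I"
    using assms(2) by (simp add: c_def the_inv_into_f_f)
qed simp

section \<open>Shifted diagrams\<close>

lemma mem_shifted_diagram: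
  "(r, c) \<in> shifted_diagram lam \<longleftrightarrow> r < length lam \<and> r \<le> c \<and> c < r + lam ! r"
  unfolding shifted_diagram_def by simp

lemma shifted_diagram_eq_Sigma: "shifted_diagram lam = (SIGMA r:{..<length lam}. {r..<r + lam ! r})"
  unfolding shifted_diagram_def by auto

lemma finite_shifted_diagram: "finite (shifted_diagram lam)"
  by (simp add: shifted_diagram_eq_Sigma)

lemma card_shifted_diagram: "card (shifted_diagram lam) = sum_list lam"
  by (simp add: shifted_diagram_eq_Sigma sum_list_sum_nth atLeast0LessThan)

lemma shifted_row_end_antimono:
  assumes "sorted_wrt (>) lam" "r1 \<le> r2" "r2 < length lam"
  shows "r2 + lam ! r2 \<le> r1 + lam ! r1"
proof (rule lift_Suc_antimono_le_ivl[of "{..<r2}", where f = "\<lambda>r. r + lam ! r"])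
  fix r assume "r \<in> {..<r2}"
  then have "lam ! Suc r < lam ! r"
    using assms unfolding sorted_wrt_iff_nth_less by auto
  then show "Suc r + lam ! Suc r \<le> r + lam ! r" by simp
qed (use assms in auto)

lemma shifted_diagram_column_convex:
  assumes "sorted_wrt (>) lam" "(r1, c) \<in> shifted_diagram lam" "(r2, c) \<in> shifted_diagram lam"
    and "r1 \<le> r" "r \<le> r2"
  shows "(r, c) \<in> shifted_diagram lam"
  using shifted_row_end_antimono[OF assms(1), of r r2] assms by (auto simp: mem_shifted_diagram)

lemma shifted_diagram_corner:
  assumes "sorted_wrt (>) lam" "(r1, c1) \<in> shifted_diagram lam" "(r2, c2) \<in> shifted_diagram lam"
    and "r1 \<le> r2" "c1 \<le> c2"
  shows "(r1, c2) \<in> shifted_diagram lam"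
  using shifted_row_end_antimono[OF assms(1), of r1 r2] assms by (auto simp: mem_shifted_diagram)

definition tableau_weakly_increasing :: "nat list \<Rightarrow> (nat \<times> nat \<Rightarrow> nat) \<Rightarrow> bool" where
  "tableau_weakly_increasing lam T \<longleftrightarrow>
     (\<forall>r c. (r, c) \<in> shifted_diagram lam \<and> (r, c + 1) \<in> shifted_diagram lam \<longrightarrow> T (r, c) \<le> T (r, c + 1))
   \<and> (\<forall>r c. (r, c) \<in> shifted_diagram lam \<and> (r + 1, c) \<in> shifted_diagram lam \<longrightarrow> T (r, c) \<le> T (r + 1, c))"

lemma tableau_weakly_increasing_le:
  assumes lam: "sorted_wrt (>) lam" and T: "tableau_weakly_increasing lam T"
    and x: "(r1, c1) \<in> shifted_diagram lam" and y: "(r2, c2) \<in> shifted_diagram lam"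
    and "r1 \<le> r2" "c1 \<le> c2"
  shows "T (r1, c1) \<le> T (r2, c2)"
proof -
  have z: "(r1, c2) \<in> shifted_diagram lam"
    using shifted_diagram_corner[OF lam x y] assms by simp
  have "T (r1, c1) \<le> T (r1, c2)"
  proof (rule lift_Suc_mono_le_ivl[of "{c1..<c2}", where f = "\<lambda>c. T (r1, c)"])
    fix c assume "c \<in> {c1..<c2}"
    then have "(r1, c) \<in> shifted_diagram lam" "(r1, c + 1) \<in> shifted_diagram lam"
      using x z by (auto simp: mem_shifted_diagram)
    then show "T (r1, c) \<le> T (r1, Suc c)"
      using T unfolding tableau_weakly_increasing_def by simp
  qed (use assms in auto)
  also have "T (r1, c2) \<le> T (r2, c2)"
  proof (rule lift_Suc_mono_le_ivl[of "{r1..<r2}", where f = "\<lambda>r. T (r, c2)"])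
    fix r assume "r \<in> {r1..<r2}"
    then have "(r, c2) \<in> shifted_diagram lam" "(r + 1, c2) \<in> shifted_diagram lam"
      using shifted_diagram_column_convex[OF lam z y] by auto
    then show "T (r, c2) \<le> T (Suc r, c2)"
      using T unfolding tableau_weakly_increasing_def by simp
  qed (use assms in auto)
  finally show ?thesis .
qed

lemma bij_betw_rank:
  assumes fin: "finite A"
    and irrefl: "\<And>x. x \<in> A \<Longrightarrow> \<not> R x x"
    and trans: "\<And>x y z. x \<in> A \<Longrightarrow> y \<in> A \<Longrightarrow> z \<in> A \<Longrightarrow> R x y \<Longrightarrow> R y z \<Longrightarrow> R x z"
    and total: "\<And>x y. x \<in> A \<Longrightarrow> y \<in> A \<Longrightarrow> x \<noteq> y \<Longrightarrow> R x y \<or> R y x"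
  shows "bij_betw (\<lambda>x. card {y\<in>A. R y x} + 1) A {1..card A}"
    and "\<And>x y. x \<in> A \<Longrightarrow> y \<in> A \<Longrightarrow> R x y \<Longrightarrow> card {z\<in>A. R z x} < card {z\<in>A. R z y}"
proof -
  show less: "card {z\<in>A. R z x} < card {z\<in>A. R z y}" if "x \<in> A" "y \<in> A" "R x y" for x y
  proof (rule psubset_card_mono)
    show "{z\<in>A. R z x} \<subset> {z\<in>A. R z y}"
      using that trans irrefl by blast
  qed (use fin in simp)
  let ?rk = "\<lambda>x. card {y\<in>A. R y x} + 1"
  have inj: "inj_on ?rk A"
  proof (rule inj_onI)
    fix x y assume xy: "x \<in> A" "y \<in> A" "?rk x = ?rk y"
    show "x = y"
    proof (rule ccontr)
      assume "x \<noteq> y"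
      then have "R x y \<or> R y x" using total xy by blast
      then show False using less xy by fastforce
    qed
  qed
  have "?rk ` A \<subseteq> {1..card A}"
  proof
    fix u assume "u \<in> ?rk ` A"
    then obtain x where x: "x \<in> A" "u = ?rk x" by blast
    have "{y\<in>A. R y x} \<subseteq> A - {x}" using irrefl x by auto
    then have "card {y\<in>A. R y x} \<le> card (A - {x})"
      using fin by (intro card_mono) auto
    also have "\<dots> < card A"
      using fin x(1) by (rule card_Diff1_less)
    finally have "card {y\<in>A. R y x} < card A" .
    then show "u \<in> {1..card A}" using x by simp
  qed
  moreover have "card (?rk ` A) = card {1..card A}"
    using card_image[OF inj] by simp
  ultimately have "?rk ` A = {1..card A}"
    by (rule card_subset_eq[rotated]) auto
  then show "bij_betw ?rk A {1..card A}"
    using inj unfolding bij_betw_def by simp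
qed

lemma card_Collect_bij_betw:
  assumes "bij_betw S A B"
  shows "card {p\<in>A. P (S p)} = card {j\<in>B. P j}"
proof (rule bij_betw_same_card, rule bij_betw_subset[OF assms])
  show "S ` {p\<in>A. P (S p)} = {j\<in>B. P j}"
    using assms unfolding bij_betw_def by auto
qed auto

lemma bij_betw_eq_if_same_order:
  fixes S S' :: "'a \<Rightarrow> nat"
  assumes S: "bij_betw S A {1..n}" and S': "bij_betw S' A {1..n}"
    and same: "\<And>x y. x \<in> A \<Longrightarrow> y \<in> A \<Longrightarrow> S x < S y \<longleftrightarrow> S' x < S' y" and x: "x \<in> A"
  shows "S x = S' x"
proof -
  have rank: "card {y\<in>A. U y \<le> U x} = U x" if U: "bij_betw U A {1..n}" for U :: "'a \<Rightarrow> nat"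
  proof -
    have "U x \<in> {1..n}" using U x by (auto dest: bij_betw_apply)
    then have "{i\<in>{1..n}. i \<le> U x} = {1..U x}" by auto
    then show ?thesis using card_Collect_bij_betw[OF U, of "\<lambda>i. i \<le> U x"] by simp
  qed
  have "{y\<in>A. S y \<le> S x} = {y\<in>A. S' y \<le> S' x}"
    using same x by (auto simp: not_less[symmetric])
  then show ?thesis using rank[OF S] rank[OF S'] by simp
qed

text \<open>Equal unprimed letters (even codes) are ordered left to right, equal primed letters
  (odd codes) top to bottom.\<close>
definition marked_order :: "(nat \<times> nat \<Rightarrow> nat) \<Rightarrow> nat \<times> nat \<Rightarrow> nat \<times> nat \<Rightarrow> bool" where
  "marked_order T x y \<longleftrightarrow> T x < T y \<or> (T x = T y \<and> even (T x) \<and> snd x < snd y)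
     \<or> (T x = T y \<and> odd (T x) \<and> fst x < fst y)"

lemma marked_order_irrefl: "\<not> marked_order T x x"
  unfolding marked_order_def by auto

lemma marked_order_trans: "marked_order T x y \<Longrightarrow> marked_order T y z \<Longrightarrow> marked_order T x z"
  unfolding marked_order_def by auto

section \<open>Stembridge's expansion of \<open>Q\<^sub>\<lambda>\<close>\<close>

locale shifted_shape =
  fixes lam :: "nat list" and n :: nat
  assumes strict_partition: "strict_partition lam n"
begin

lemma strict_partition_sorted: "sorted_wrt (>) lam"
  using strict_partition unfolding strict_partition_def by simp

lemma strict_partition_sum: "sum_list lam = n"
  using strict_partition unfolding strict_partition_def by simp

lemma standard_tableauD:
  assumes "S \<in> standard_shifted_tableaux lam"
  shows "bij_betw S (shifted_diagram lam) {1..n}"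
    and "\<And>p. p \<notin> shifted_diagram lam \<Longrightarrow> S p = 0"
    and "tableau_weakly_increasing lam S"
  using assms strict_partition_sum
  unfolding standard_shifted_tableaux_def tableau_weakly_increasing_def by (auto simp: less_imp_le)

lemma standard_tableau_le:
  assumes "S \<in> standard_shifted_tableaux lam" "x \<in> shifted_diagram lam" "y \<in> shifted_diagram lam"
    and "fst x \<le> fst y" "snd x \<le> snd y"
  shows "S x \<le> S y"
  using tableau_weakly_increasing_le[OF strict_partition_sorted standard_tableauD(3)[OF assms(1)],
      of "fst x" "snd x" "fst y" "snd y"] assms by simp

lemma standard_tableau_in_range:
  assumes "S \<in> standard_shifted_tableaux lam" "x \<in> shifted_diagram lam"
  shows "S x \<in> {1..n}"
  using standard_tableauD(1)[OF assms(1)] assms(2) by (auto dest: bij_betw_apply)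

lemma standard_tableau_inv:
  assumes "S \<in> standard_shifted_tableaux lam" "i \<in> {1..n}"
  shows "the_inv_into (shifted_diagram lam) S i \<in> shifted_diagram lam"
    and "S (the_inv_into (shifted_diagram lam) S i) = i"
  using standard_tableauD(1)[OF assms(1)] assms(2)
  by (auto simp: bij_betw_def the_inv_into_into f_the_inv_into_f)

lemma row_of_standard_tableau:
  assumes "S \<in> standard_shifted_tableaux lam" "x \<in> shifted_diagram lam"
  shows "row_of lam S (S x) = fst x"
  using standard_tableauD(1)[OF assms(1)] assms(2)
  by (simp add: row_of_def bij_betw_def the_inv_into_f_f)

lemma marked_word_run_even:
  assumes S: "S \<in> standard_shifted_tableaux lam" and w: "w \<in> marked_words n (tab_Des lam S) \<alpha>"
    and ij: "1 \<le> i" "i \<le> j" "j \<le> n" and eq: "w i = w j" and ev: "even (w i)"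
  shows "row_of lam S j \<le> row_of lam S i"
proof (rule lift_Suc_antimono_le_ivl[of "{i..<j}", where f = "row_of lam S"])
  fix k assume k: "k \<in> {i..<j}"
  have "w i \<le> w k" "w k \<le> w (k + 1)" "w (k + 1) \<le> w j"
    using weakly_increasing_le[OF marked_wordsD(3)[OF w]] k ij by auto
  then have "w k = w (k + 1)" "w k = w i" using eq by auto
  moreover have "k \<in> {1..<n}" using k ij by auto
  ultimately have "k \<notin> tab_Des lam S"
    using marked_wordsD(4)[OF w] ev by auto
  then show "row_of lam S (Suc k) \<le> row_of lam S k"
    using \<open>k \<in> {1..<n}\<close> unfolding tab_Des_def strict_partition_sum by auto
qed (use ij in auto)

lemma marked_word_run_odd:
  assumes S: "S \<in> standard_shifted_tableaux lam" and w: "w \<in> marked_words n (tab_Des lam S) \<alpha>"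
    and ij: "1 \<le> i" "i < j" "j \<le> n" and eq: "w i = w j" and od: "odd (w i)"
  shows "row_of lam S i < row_of lam S j"
proof (rule lift_Suc_mono_less_ivl[of "{i..<j}", where f = "row_of lam S"])
  fix k assume k: "k \<in> {i..<j}"
  have "w i \<le> w k" "w k \<le> w (k + 1)" "w (k + 1) \<le> w j"
    using weakly_increasing_le[OF marked_wordsD(3)[OF w]] k ij by auto
  then have "w k = w (k + 1)" "w k = w i" using eq by auto
  moreover have "k \<in> {1..<n}" using k ij by auto
  ultimately have "k \<in> tab_Des lam S"
    using marked_wordsD(4)[OF w] od by auto
  then show "row_of lam S k < row_of lam S (Suc k)"
    unfolding tab_Des_def by auto
qed (use ij in auto)

lemma pair_le:
  assumes S: "S \<in> standard_shifted_tableaux lam" and w: "w \<in> marked_words n (tab_Des lam S) \<alpha>"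
    and "x \<in> shifted_diagram lam" "y \<in> shifted_diagram lam" "S x \<le> S y"
  shows "w (S x) \<le> w (S y)"
  using weakly_increasing_le[OF marked_wordsD(3)[OF w]] standard_tableau_in_range[OF S] assms(3-)
  by (meson atLeastAtMost_iff)

lemma pair_tie_rows:
  assumes S: "S \<in> standard_shifted_tableaux lam" and w: "w \<in> marked_words n (tab_Des lam S) \<alpha>"
    and x: "x \<in> shifted_diagram lam" and y: "y \<in> shifted_diagram lam"
    and "S x < S y" "w (S x) = w (S y)"
  shows "odd (w (S x)) \<Longrightarrow> fst x < fst y" and "even (w (S x)) \<Longrightarrow> fst y \<le> fst x"
  using marked_word_run_odd[OF S w, of "S x" "S y"] marked_word_run_even[OF S w, of "S x" "S y"]
    standard_tableau_in_range[OF S x] standard_tableau_in_range[OF S y]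
    row_of_standard_tableau[OF S x] row_of_standard_tableau[OF S y] assms(5,6)
  by auto

lemma marked_tableau_of_pair:
  assumes S: "S \<in> standard_shifted_tableaux lam" and w: "w \<in> marked_words n (tab_Des lam S) \<alpha>"
  shows "w \<circ> S \<in> marked_shifted_tableaux lam"
proof -
  have row: "(w \<circ> S) (r, c) \<le> (w \<circ> S) (r, c + 1) \<and>
      ((w \<circ> S) (r, c) = (w \<circ> S) (r, c + 1) \<longrightarrow> even ((w \<circ> S) (r, c)))"
    if rc: "(r, c) \<in> shifted_diagram lam" "(r, c + 1) \<in> shifted_diagram lam" for r c
  proof -
    have "S (r, c) < S (r, c + 1)"
      using S rc unfolding standard_shifted_tableaux_def by blast
    then show ?thesis
      using pair_le[OF S w rc] pair_tie_rows(1)[OF S w rc] by auto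
  qed
  have column: "(w \<circ> S) (r, c) \<le> (w \<circ> S) (r + 1, c) \<and>
      ((w \<circ> S) (r, c) = (w \<circ> S) (r + 1, c) \<longrightarrow> odd ((w \<circ> S) (r, c)))"
    if rc: "(r, c) \<in> shifted_diagram lam" "(r + 1, c) \<in> shifted_diagram lam" for r c
  proof -
    have "S (r, c) < S (r + 1, c)"
      using S rc unfolding standard_shifted_tableaux_def by blast
    then show ?thesis
      using pair_le[OF S w rc] pair_tie_rows(2)[OF S w rc] by auto
  qed
  have "\<forall>p. p \<notin> shifted_diagram lam \<longrightarrow> (w \<circ> S) p = 0"
    using standard_tableauD(2)[OF S] marked_wordsD(1)[OF w] by simp
  moreover have "\<forall>p \<in> shifted_diagram lam. 0 < (w \<circ> S) p"
    using marked_wordsD(2)[OF w] standard_tableau_in_range[OF S] by simp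
  ultimately show ?thesis
    unfolding marked_shifted_tableaux_def using row column by blast
qed

lemma content_of_pair:
  assumes S: "S \<in> standard_shifted_tableaux lam" and w: "w \<in> marked_words n (tab_Des lam S) \<alpha>"
  shows "tableau_content lam (w \<circ> S) = \<alpha>"
proof
  fix v
  have "tableau_content lam (w \<circ> S) v = card {j\<in>{1..n}. (w j - 1) div 2 = v}"
    unfolding tableau_content_def o_apply by (rule card_Collect_bij_betw[OF standard_tableauD(1)[OF S]])
  then show "tableau_content lam (w \<circ> S) v = \<alpha> v"
    using marked_wordsD(5)[OF w, of v] by simp
qed

lemma marked_tableau_weakly_increasing:
  "T \<in> marked_shifted_tableaux lam \<Longrightarrow> tableau_weakly_increasing lam T"
  unfolding marked_shifted_tableaux_def tableau_weakly_increasing_def by blast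

lemma marked_tableau_column_tie:
  assumes T: "T \<in> marked_shifted_tableaux lam" and x: "(r1, c) \<in> shifted_diagram lam"
    and y: "(r2, c) \<in> shifted_diagram lam" and "r1 < r2" and eq: "T (r1, c) = T (r2, c)"
  shows "odd (T (r1, c))"
proof -
  have z: "(r1 + 1, c) \<in> shifted_diagram lam"
    using shifted_diagram_column_convex[OF strict_partition_sorted x y] \<open>r1 < r2\<close> by simp
  have "T (r1, c) \<le> T (r1 + 1, c)" "T (r1 + 1, c) \<le> T (r2, c)"
    using tableau_weakly_increasing_le[OF strict_partition_sorted marked_tableau_weakly_increasing[OF T]]
      x y z \<open>r1 < r2\<close> by auto
  then have "T (r1, c) = T (r1 + 1, c)" using eq by simp
  then show ?thesis
    using T x z unfolding marked_shifted_tableaux_def by blast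
qed

lemma marked_tableau_row_tie:
  assumes T: "T \<in> marked_shifted_tableaux lam" and x: "(r, c1) \<in> shifted_diagram lam"
    and y: "(r, c2) \<in> shifted_diagram lam" and "c1 < c2" and eq: "T (r, c1) = T (r, c2)"
  shows "even (T (r, c1))"
proof -
  have z: "(r, c1 + 1) \<in> shifted_diagram lam"
    using x y \<open>c1 < c2\<close> by (auto simp: mem_shifted_diagram)
  have "T (r, c1) \<le> T (r, c1 + 1)" "T (r, c1 + 1) \<le> T (r, c2)"
    using tableau_weakly_increasing_le[OF strict_partition_sorted marked_tableau_weakly_increasing[OF T]]
      x y z \<open>c1 < c2\<close> by auto
  then have "T (r, c1) = T (r, c1 + 1)" using eq by simp
  then show ?thesis
    using T x z unfolding marked_shifted_tableaux_def by blast
qed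

lemma marked_order_total:
  assumes T: "T \<in> marked_shifted_tableaux lam" and x: "x \<in> shifted_diagram lam"
    and y: "y \<in> shifted_diagram lam" and "x \<noteq> y"
  shows "marked_order T x y \<or> marked_order T y x"
proof -
  obtain r1 c1 r2 c2 where xy: "x = (r1, c1)" "y = (r2, c2)" by fastforce
  consider "T x \<noteq> T y" | "T x = T y" "even (T x)" | "T x = T y" "odd (T x)" by blast
  then show ?thesis
  proof cases
    case 2
    have "c1 \<noteq> c2"
    proof
      assume "c1 = c2"
      then have "r1 < r2 \<or> r2 < r1" using \<open>x \<noteq> y\<close> xy by auto
      then show False
        using marked_tableau_column_tie[OF T] x y xy \<open>c1 = c2\<close> 2 by fastforce
    qed
    then show ?thesis unfolding marked_order_def using 2 xy by auto
  next
    case 3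
    have "r1 \<noteq> r2"
    proof
      assume "r1 = r2"
      then have "c1 < c2 \<or> c2 < c1" using \<open>x \<noteq> y\<close> xy by auto
      then show False
        using marked_tableau_row_tie[OF T] x y xy \<open>r1 = r2\<close> 3 by fastforce
    qed
    then show ?thesis unfolding marked_order_def using 3 xy by auto
  qed (auto simp: marked_order_def)
qed

lemma marked_order_tie_rows:
  assumes T: "T \<in> marked_shifted_tableaux lam"
    and x: "x \<in> shifted_diagram lam" and y: "y \<in> shifted_diagram lam"
    and R: "marked_order T x y" and eq: "T x = T y"
  shows "even (T x) \<longleftrightarrow> \<not> fst x < fst y"
proof
  assume ev: "even (T x)"
  show "\<not> fst x < fst y"
  proof
    assume below: "fst x < fst y"
    moreover have "snd x < snd y" using R eq ev unfolding marked_order_def by auto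
    ultimately have z: "(fst x, snd y) \<in> shifted_diagram lam"
      using shifted_diagram_corner[OF strict_partition_sorted, of "fst x" "snd x" "fst y" "snd y"] x y
      by simp
    have "T x \<le> T (fst x, snd y)" "T (fst x, snd y) \<le> T y"
      using tableau_weakly_increasing_le[OF strict_partition_sorted marked_tableau_weakly_increasing[OF T]]
        x y z below \<open>snd x < snd y\<close>
      by (metis less_imp_le order_refl prod.collapse)+
    then have "T (fst x, snd y) = T (fst y, snd y)" using eq by simp
    moreover from this have "odd (T (fst x, snd y))"
      using marked_tableau_column_tie[OF T z _ below] y by simp
    ultimately show False using ev eq by simp
  qed
next
  assume "\<not> fst x < fst y"
  then show "even (T x)" using R eq unfolding marked_order_def by auto
qed

lemma marked_order_imp_less:
  assumes S: "S \<in> standard_shifted_tableaux lam" and w: "w \<in> marked_words n (tab_Des lam S) \<alpha>"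
    and x: "x \<in> shifted_diagram lam" and y: "y \<in> shifted_diagram lam"
    and R: "marked_order (w \<circ> S) x y"
  shows "S x < S y"
proof (rule ccontr)
  assume "\<not> S x < S y"
  moreover have "x \<noteq> y"
    using R marked_order_irrefl by metis
  then have "S x \<noteq> S y"
    using standard_tableauD(1)[OF S] x y by (auto simp: bij_betw_def inj_on_eq_iff)
  ultimately have lt: "S y < S x" by simp
  then have "w (S y) \<le> w (S x)"
    using pair_le[OF S w y x] by simp
  then consider "w (S y) = w (S x)" "even (w (S y))" "snd x < snd y"
    | "w (S y) = w (S x)" "odd (w (S y))" "fst x < fst y"
    using R unfolding marked_order_def by fastforce
  then show False
  proof cases
    case 1
    then have "S x \<le> S y"
      using pair_tie_rows(2)[OF S w y x lt] standard_tableau_le[OF S x y] by simp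
    then show False using lt by simp
  next
    case 2
    then show False using pair_tie_rows(1)[OF S w y x lt] by simp
  qed
qed

lemma less_iff_marked_order:
  assumes S: "S \<in> standard_shifted_tableaux lam" and w: "w \<in> marked_words n (tab_Des lam S) \<alpha>"
    and x: "x \<in> shifted_diagram lam" and y: "y \<in> shifted_diagram lam"
  shows "S x < S y \<longleftrightarrow> marked_order (w \<circ> S) x y"
proof
  assume lt: "S x < S y"
  show "marked_order (w \<circ> S) x y"
  proof (rule ccontr)
    assume "\<not> marked_order (w \<circ> S) x y"
    then have "marked_order (w \<circ> S) y x"
      using marked_order_total[OF marked_tableau_of_pair[OF S w] x y] lt by auto
    then show False
      using marked_order_imp_less[OF S w y x] lt by simp
  qed
qed (rule marked_order_imp_less[OF S w x y])

definition tableau_pairs :: "(nat \<Rightarrow> nat) \<Rightarrow> ((nat \<times> nat \<Rightarrow> nat) \<times> (nat \<Rightarrow> nat)) set" where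
  "tableau_pairs \<alpha> = (SIGMA S:standard_shifted_tableaux lam. marked_words n (tab_Des lam S) \<alpha>)"

lemma tableau_pair_unique:
  assumes p: "(S, w) \<in> tableau_pairs \<alpha>" and p': "(S', w') \<in> tableau_pairs \<alpha>"
    and eq: "w \<circ> S = w' \<circ> S'"
  shows "S = S' \<and> w = w'"
proof -
  have S: "S \<in> standard_shifted_tableaux lam" and w: "w \<in> marked_words n (tab_Des lam S) \<alpha>"
    and S': "S' \<in> standard_shifted_tableaux lam" and w': "w' \<in> marked_words n (tab_Des lam S') \<alpha>"
    using p p' unfolding tableau_pairs_def by auto
  have "w j = w' j" for j
  proof (cases "j \<in> {1..n}")
    case True
    have "card {i\<in>{1..n}. w i = v} = card {i\<in>{1..n}. w' i = v}" for v
    proof -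
      have "card {i\<in>{1..n}. w i = v} = card {p\<in>shifted_diagram lam. w (S p) = v}"
        by (rule card_Collect_bij_betw[OF standard_tableauD(1)[OF S], symmetric])
      also have "\<dots> = card {p\<in>shifted_diagram lam. w' (S' p) = v}"
        using fun_cong[OF eq] by simp
      also have "\<dots> = card {i\<in>{1..n}. w' i = v}"
        by (rule card_Collect_bij_betw[OF standard_tableauD(1)[OF S']])
      finally show ?thesis .
    qed
    then show ?thesis
      using weakly_increasing_eq_if_same_content[OF marked_wordsD(3)[OF w] marked_wordsD(3)[OF w'] _ True]
      by blast
  qed (use marked_wordsD(1)[OF w] marked_wordsD(1)[OF w'] in simp)
  moreover have "S p = S' p" for p
  proof (cases "p \<in> shifted_diagram lam")
    case True
    have "S x < S y \<longleftrightarrow> S' x < S' y" if "x \<in> shifted_diagram lam" "y \<in> shifted_diagram lam" for x y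
      using less_iff_marked_order[OF S w that] less_iff_marked_order[OF S' w' that] eq by simp
    then show ?thesis
      using bij_betw_eq_if_same_order[OF standard_tableauD(1)[OF S] standard_tableauD(1)[OF S'] _ True]
      by blast
  qed (use standard_tableauD(2)[OF S] standard_tableauD(2)[OF S'] in simp)
  ultimately show ?thesis by auto
qed

definition standardisation :: "(nat \<times> nat \<Rightarrow> nat) \<Rightarrow> nat \<times> nat \<Rightarrow> nat" where
  "standardisation T x =
     (if x \<in> shifted_diagram lam then card {y \<in> shifted_diagram lam. marked_order T y x} + 1 else 0)"

lemma bij_betw_standardisation:
  assumes T: "T \<in> marked_shifted_tableaux lam"
  shows "bij_betw (standardisation T) (shifted_diagram lam) {1..n}"
proof -
  have "card (shifted_diagram lam) = n"
    using card_shifted_diagram strict_partition_sum by simp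
  then show ?thesis
    using bij_betw_rank(1)[OF finite_shifted_diagram[of lam], of "marked_order T"]
      marked_order_irrefl marked_order_trans marked_order_total[OF T]
    by (subst bij_betw_cong[where g = "\<lambda>x. card {y \<in> shifted_diagram lam. marked_order T y x} + 1"])
      (auto simp: standardisation_def)
qed

lemma standardisation_less:
  assumes "T \<in> marked_shifted_tableaux lam"
    and "x \<in> shifted_diagram lam" "y \<in> shifted_diagram lam" "marked_order T x y"
  shows "standardisation T x < standardisation T y"
  using bij_betw_rank(2)[OF finite_shifted_diagram[of lam], of "marked_order T"]
    marked_order_irrefl marked_order_trans marked_order_total[OF assms(1)] assms(2-)
  by (simp add: standardisation_def)

lemma standardisation_standard:
  assumes T: "T \<in> marked_shifted_tableaux lam"
  shows "standardisation T \<in> standard_shifted_tableaux lam"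
proof -
  have "marked_order T (r, c) (r, c + 1)"
    if "(r, c) \<in> shifted_diagram lam" "(r, c + 1) \<in> shifted_diagram lam" for r c
  proof -
    have "T (r, c) \<le> T (r, c + 1)" "T (r, c) = T (r, c + 1) \<longrightarrow> even (T (r, c))"
      using T that unfolding marked_shifted_tableaux_def by blast+
    then show ?thesis unfolding marked_order_def by auto
  qed
  moreover have "marked_order T (r, c) (r + 1, c)"
    if "(r, c) \<in> shifted_diagram lam" "(r + 1, c) \<in> shifted_diagram lam" for r c
  proof -
    have "T (r, c) \<le> T (r + 1, c)" "T (r, c) = T (r + 1, c) \<longrightarrow> odd (T (r, c))"
      using T that unfolding marked_shifted_tableaux_def by blast+
    then show ?thesis unfolding marked_order_def by auto
  qed
  moreover have "\<forall>p. p \<notin> shifted_diagram lam \<longrightarrow> standardisation T p = 0"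
    by (simp add: standardisation_def)
  ultimately show ?thesis
    unfolding standard_shifted_tableaux_def mem_Collect_eq strict_partition_sum
    using bij_betw_standardisation[OF T] standardisation_less[OF T] by blast
qed

definition word_of_tableau :: "(nat \<times> nat \<Rightarrow> nat) \<Rightarrow> nat \<Rightarrow> nat" where
  "word_of_tableau T j =
     (if j \<in> {1..n} then T (the_inv_into (shifted_diagram lam) (standardisation T) j) else 0)"

lemma tableau_eq_word_comp_standardisation:
  assumes T: "T \<in> marked_shifted_tableaux lam"
  shows "T = word_of_tableau T \<circ> standardisation T"
proof
  fix p
  have S: "standardisation T \<in> standard_shifted_tableaux lam"
    by (rule standardisation_standard[OF T])
  show "T p = (word_of_tableau T \<circ> standardisation T) p"
  proof (cases "p \<in> shifted_diagram lam")
    case True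
    then show ?thesis
      using standard_tableau_in_range[OF S True] bij_betw_standardisation[OF T]
      by (simp add: word_of_tableau_def bij_betw_def the_inv_into_f_f)
  next
    case False
    then have "T p = 0"
      using T unfolding marked_shifted_tableaux_def by blast
    then show ?thesis
      using standard_tableauD(2)[OF S False] by (simp add: word_of_tableau_def)
  qed
qed

lemma word_of_tableau_marked:
  assumes T: "T \<in> marked_shifted_tableaux lam" and content: "tableau_content lam T = \<alpha>"
  shows "word_of_tableau T \<in> marked_words n (tab_Des lam (standardisation T)) \<alpha>"
proof -
  let ?D = "shifted_diagram lam"
  define S where "S = standardisation T"
  define w where "w = word_of_tableau T"
  have S: "S \<in> standard_shifted_tableaux lam"
    unfolding S_def by (rule standardisation_standard[OF T])
  have T_eq: "T = w \<circ> S"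
    unfolding S_def w_def by (rule tableau_eq_word_comp_standardisation[OF T])
  have inv: "the_inv_into ?D S j \<in> ?D" "S (the_inv_into ?D S j) = j" "w j = T (the_inv_into ?D S j)"
    if "j \<in> {1..n}" for j
    using standard_tableau_inv[OF S that] that by (simp_all add: w_def S_def word_of_tableau_def)
  have ties: "w j \<le> w (j + 1) \<and> (w j = w (j + 1) \<longrightarrow> (even (w j) \<longleftrightarrow> j \<notin> tab_Des lam S))"
    if j: "j \<in> {1..<n}" for j
  proof -
    define x where "x = the_inv_into ?D S j"
    define y where "y = the_inv_into ?D S (j + 1)"
    have x: "x \<in> ?D" "S x = j" "w j = T x" and y: "y \<in> ?D" "S y = j + 1" "w (j + 1) = T y"
      using inv[of j] inv[of "j + 1"] j unfolding x_def y_def by auto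
    have rows: "row_of lam S j = fst x" "row_of lam S (j + 1) = fst y"
      using row_of_standard_tableau[OF S] x y by metis+
    have R: "marked_order T x y"
    proof (rule ccontr)
      assume "\<not> marked_order T x y"
      moreover have "x \<noteq> y" using x y by auto
      ultimately have "marked_order T y x"
        using marked_order_total[OF T x(1) y(1)] by auto
      then show False
        using standardisation_less[OF T y(1) x(1)] x y unfolding S_def by simp
    qed
    have "even (T x) \<longleftrightarrow> \<not> fst x < fst y" if "T x = T y"
      using marked_order_tie_rows[OF T x(1) y(1) R that] .
    moreover have "T x \<le> T y"
      using R unfolding marked_order_def by auto
    ultimately show ?thesis
      using x y rows j strict_partition_sum unfolding tab_Des_def by auto
  qed
  have "\<alpha> v = card {j \<in> {1..n}. (w j - 1) div 2 = v}" for v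
  proof -
    have "\<alpha> v = card {p \<in> ?D. ((w \<circ> S) p - 1) div 2 = v}"
      using content T_eq unfolding tableau_content_def by auto
    also have "\<dots> = card {j \<in> {1..n}. (w j - 1) div 2 = v}"
      unfolding o_apply by (rule card_Collect_bij_betw[OF standard_tableauD(1)[OF S]])
    finally show ?thesis .
  qed
  moreover have "\<forall>j\<in>{1..n}. 0 < w j"
    using inv T unfolding marked_shifted_tableaux_def by simp
  moreover have "\<forall>j. j \<notin> {1..n} \<longrightarrow> w j = 0"
    by (simp add: w_def word_of_tableau_def)
  ultimately show ?thesis
    unfolding marked_words_def S_def[symmetric] w_def[symmetric] using ties by blast
qed

lemma bij_betw_tableau_pairs:
  "bij_betw (\<lambda>(S, w). w \<circ> S) (tableau_pairs \<alpha>)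
     {T \<in> marked_shifted_tableaux lam. tableau_content lam T = \<alpha>}"
proof (rule bij_betw_imageI)
  show "inj_on (\<lambda>(S, w). w \<circ> S) (tableau_pairs \<alpha>)"
    using tableau_pair_unique by (auto simp: inj_on_def)
  show "(\<lambda>(S, w). w \<circ> S) ` tableau_pairs \<alpha> = {T \<in> marked_shifted_tableaux lam. tableau_content lam T = \<alpha>}"
  proof (intro equalityI subsetI)
    fix T assume "T \<in> {T \<in> marked_shifted_tableaux lam. tableau_content lam T = \<alpha>}"
    then have T: "T \<in> marked_shifted_tableaux lam" and "tableau_content lam T = \<alpha>" by auto
    then have "(standardisation T, word_of_tableau T) \<in> tableau_pairs \<alpha>"
      unfolding tableau_pairs_def using standardisation_standard word_of_tableau_marked by blast
    then show "T \<in> (\<lambda>(S, w). w \<circ> S) ` tableau_pairs \<alpha>"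
      using tableau_eq_word_comp_standardisation[OF T] by force
  qed (auto simp: tableau_pairs_def marked_tableau_of_pair content_of_pair)
qed

lemma finite_standard_shifted_tableaux: "finite (standard_shifted_tableaux lam)"
proof (rule finite_subset)
  show "standard_shifted_tableaux lam \<subseteq>
      {S. \<forall>x. (x \<in> shifted_diagram lam \<longrightarrow> S x \<in> {1..n}) \<and> (x \<notin> shifted_diagram lam \<longrightarrow> S x = 0)}"
    using standard_tableauD(2) standard_tableau_in_range by blast
  show "finite \<dots>"
    using finite_set_of_finite_funs[OF finite_shifted_diagram[of lam], of "{1..n}" 0] by simp
qed

theorem SchurQ_eq_sum_Theta:
  assumes "1 \<le> n"
  shows "SchurQ lam \<alpha> = (\<Sum>S\<in>standard_shifted_tableaux lam. Theta n (tab_Peak lam S) \<alpha>)"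
proof -
  have "SchurQ lam \<alpha> = real (card (tableau_pairs \<alpha>))"
    unfolding SchurQ_def using bij_betw_same_card[OF bij_betw_tableau_pairs] by simp
  also have "\<dots> = (\<Sum>S\<in>standard_shifted_tableaux lam. real (card (marked_words n (tab_Des lam S) \<alpha>)))"
    unfolding tableau_pairs_def
    using finite_standard_shifted_tableaux finite_marked_words by simp
  also have "\<dots> = (\<Sum>S\<in>standard_shifted_tableaux lam. Theta n (tab_Peak lam S) \<alpha>)"
  proof (rule sum.cong[OF refl])
    fix S
    have "tab_Des lam S \<subseteq> {1..<n}"
      unfolding tab_Des_def strict_partition_sum by auto
    then show "real (card (marked_words n (tab_Des lam S) \<alpha>)) = Theta n (tab_Peak lam S) \<alpha>"
      unfolding tab_Peak_eq_peaks by (rule card_marked_words[OF assms])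
  qed
  finally show ?thesis .
qed

lemma SchurQ_eq_sum_representatives:
  assumes "1 \<le> n" and C: "C \<subseteq> compositions n"
    and inj: "inj_on HP C" and rep: "\<forall>K \<in> compositions n. \<exists>I\<in>C. HP I = HP K"
  shows "SchurQ lam \<alpha> = (\<Sum>I\<in>C.
    real (card {T \<in> standard_shifted_tableaux lam. tab_Peak lam T = HP I}) * Theta n (HP I) \<alpha>)"
proof -
  let ?ST = "standard_shifted_tableaux lam"
  let ?A = "\<lambda>I. {T \<in> ?ST. tab_Peak lam T = HP I}"
  have finC: "finite C"
    using C finite_compositions finite_subset by blast
  have "\<exists>I\<in>C. tab_Peak lam T = HP I" if "T \<in> ?ST" for T
  proof -
    have "tab_Peak lam T \<subseteq> {1..<n}"
      unfolding tab_Peak_def tab_Des_def strict_partition_sum by auto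
    then obtain K where "K \<in> compositions n" "Des K = tab_Peak lam T"
      using Des_surj by blast
    moreover have "HP K = tab_Peak lam T"
      using calculation(2) by (simp add: HP_eq_peaks tab_Peak_eq_peaks peaks_peaks)
    ultimately show ?thesis using rep by fastforce
  qed
  then have cover: "(\<Union>I\<in>C. ?A I) = ?ST" by auto
  have "(\<Sum>I\<in>C. real (card (?A I)) * Theta n (HP I) \<alpha>) =
      (\<Sum>I\<in>C. \<Sum>T\<in>?A I. Theta n (tab_Peak lam T) \<alpha>)"
  proof (rule sum.cong[OF refl])
    fix I
    have "(\<Sum>T\<in>?A I. Theta n (tab_Peak lam T) \<alpha>) = (\<Sum>T\<in>?A I. Theta n (HP I) \<alpha>)"
      by (rule sum.cong) auto
    then show "real (card (?A I)) * Theta n (HP I) \<alpha> = (\<Sum>T\<in>?A I. Theta n (tab_Peak lam T) \<alpha>)"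
      by simp
  qed
  also have "\<dots> = (\<Sum>T\<in>(\<Union>I\<in>C. ?A I). Theta n (tab_Peak lam T) \<alpha>)"
  proof (rule sum.UNION_disjoint[symmetric])
    show "\<forall>I\<in>C. \<forall>J\<in>C. I \<noteq> J \<longrightarrow> ?A I \<inter> ?A J = {}"
      using inj by (auto simp: inj_on_def)
  qed (use finC finite_standard_shifted_tableaux in auto)
  also have "\<dots> = SchurQ lam \<alpha>"
    using cover SchurQ_eq_sum_Theta[OF assms(1)] by simp
  finally show ?thesis ..
qed

end

section \<open>The decomposition numbers\<close>

theorem mainTheorem14:
  fixes lam :: "nat list" and n :: nat and C :: "nat list set"
  assumes "n \<ge> 1"
    and "strict_partition lam n"
    and "C \<subseteq> compositions n"
    and "\<forall>K \<in> compositions n. \<exists>!I. I \<in> C \<and> HP I = HP K"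
  shows "\<forall>d :: nat list \<Rightarrow> real.
     (\<forall>\<alpha>. SchurQ lam \<alpha> / 2 ^ (length lam div 2) =
           (\<Sum>I\<in>C. d I * Theta n (HP I) \<alpha> / 2 ^ ((card (HP I) + 1) div 2)))
     \<longleftrightarrow>
     (\<forall>I \<in> C. d I = 2 ^ ((card (HP I) + 1) div 2) / 2 ^ (length lam div 2) *
        real (card {T \<in> standard_shifted_tableaux lam. tab_Peak lam T = HP I}))"
proof
  fix d :: "nat list \<Rightarrow> real"
  interpret shifted_shape lam n by (rule shifted_shape.intro[OF assms(2)])
  let ?m = "\<lambda>I. real (card {T \<in> standard_shifted_tableaux lam. tab_Peak lam T = HP I})"
  let ?L = "2 ^ (length lam div 2) :: real" and ?k = "\<lambda>I. 2 ^ ((card (HP I) + 1) div 2) :: real"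
  have inj: "inj_on HP C"
    using assms(3,4) by (auto simp: inj_on_def) (metis subsetD)
  have rep: "\<forall>K \<in> compositions n. \<exists>I\<in>C. HP I = HP K"
    using assms(4) by blast
  have Q: "SchurQ lam \<alpha> / ?L = (\<Sum>I\<in>C. ?m I / ?L * Theta n (HP I) \<alpha>)" for \<alpha>
    using SchurQ_eq_sum_representatives[OF assms(1,3) inj rep]
    by (simp add: sum_divide_distrib)
  have d: "(\<Sum>I\<in>C. d I * Theta n (HP I) \<alpha> / ?k I) = (\<Sum>I\<in>C. d I / ?k I * Theta n (HP I) \<alpha>)" for \<alpha>
    by simp
  have "(\<forall>\<alpha>. SchurQ lam \<alpha> / ?L = (\<Sum>I\<in>C. d I * Theta n (HP I) \<alpha> / ?k I))
      \<longleftrightarrow> (\<forall>I\<in>C. ?m I / ?L = d I / ?k I)"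
    unfolding Q d by (rule Theta_expansion_unique[OF assms(3) inj])
  also have "\<dots> \<longleftrightarrow> (\<forall>I\<in>C. d I = ?k I / ?L * ?m I)"
    by (auto simp: field_simps)
  finally show "(\<forall>\<alpha>. SchurQ lam \<alpha> / ?L = (\<Sum>I\<in>C. d I * Theta n (HP I) \<alpha> / ?k I))
      \<longleftrightarrow> (\<forall>I\<in>C. d I = ?k I / ?L * ?m I)" .
qed

end
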